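(* Assume (SH). For every $x\in\operatorname{dom}f$, \[ \partial f(x)=\bigcap_{\varepsilon>0}\overline{\operatorname{co}}\Big(\Big(\bigcup_{t\in T(x)}\partial_\varepsilon f_t(x)\Big)+\Big(\bigcup_{t\in T\setminus T(x)}\{0,\varepsilon\}\,\partial_\varepsilon(\rho_tf_t)(x)\Big)\Big), \] where $\rho_t=\rho_t(\varepsilon):=\dfrac{\varepsilon}{2f(x)-2f_t(x)+\varepsilon}$ for $t\in T\setminus T(x)$ (and the second union is $\{\theta\}$ when $T(x)=T$). If in addition $f$ attains its minimum at $x$, then also \[ \partial f(x)=\bigcap_{\varepsilon>0}\overline{\operatorname{co}}\Big(\Big(\bigcup_{t\in T(x)}\partial_\varepsilon f_t(x)\Big)\cup\Big(\bigcup_{t\in T\setminus T(x)}\varepsilon\,\partial_\varepsilon(\rho_tf_t)(x)\Big)\Big). \]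
   Context: $X$ is a real separated locally convex space with dual $X^*$ carrying the weak$^*$ topology; $\theta$ is the zero of $X^*$. $T$ is a nonempty index set, $\{f_t: t\in T\}$ are proper convex lsc functions $X\to\mathbb{R}\cup\{+\infty\}$, $f:=\sup_{t\in T}f_t$. $T(x):=\{t\in T: f_t(x)=f(x)\}$. $\partial_\varepsilon g(x)$ is the $\varepsilon$-subdifferential ($\{x^*:\ g(y)\ge g(x)+\langle x^*,y-x\rangle-\varepsilon\ \forall y\}$ if $g(x)\in\mathbb{R}$), $\partial=\partial_0$. $\Lambda A=\{\lambda a:\lambda\in\Lambda,a\in A\}$; $+$ is the Minkowski sum; $\overline{\operatorname{co}}$ is the weak$^*$-closed convex hull. (SH): $T$ is compact Hausdorff and $t\mapsto f_t(z)$ is upper semicontinuous on $T$ for each $z\in X$. *)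

theory Defs
  imports "HOL-Analysis.Analysis" "HOL-Library.Extended_Real"
begin

definition lcs_space :: "'x::{real_vector,t2_space} itself \<Rightarrow> bool" where
  "lcs_space _ \<longleftrightarrow>
     continuous_on UNIV (\<lambda>(u::'x, v::'x). u + v) \<and>
     continuous_on UNIV (\<lambda>(c::real, v::'x). c *\<^sub>R v) \<and>
     (\<forall>U::'x set. open U \<and> 0 \<in> U \<longrightarrow> (\<exists>V. open V \<and> convex V \<and> 0 \<in> V \<and> V \<subseteq> U))"

definition dual :: "('x::{real_vector,topological_space} \<Rightarrow> real) set" where
  "dual = {\<phi>. linear \<phi> \<and> continuous_on UNIV \<phi>}"

text \<open>Weak* topology on X*: the topology of pointwise convergence (product topology
  on functions) restricted to the dual.\<close>
definition wstar_closed :: "('x::{real_vector,topological_space} \<Rightarrow> real) set \<Rightarrow> bool" where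
  "wstar_closed C \<longleftrightarrow> C \<subseteq> dual \<and> closedin (top_of_set dual) C"

definition fconvex :: "('x \<Rightarrow> real) set \<Rightarrow> bool" where
  "fconvex C \<longleftrightarrow> (\<forall>a\<in>C. \<forall>b\<in>C. \<forall>u::real. 0 \<le> u \<and> u \<le> 1 \<longrightarrow>
       (\<lambda>y. (1 - u) * a y + u * b y) \<in> C)"

definition wstar_cco :: "('x::{real_vector,topological_space} \<Rightarrow> real) set \<Rightarrow> ('x \<Rightarrow> real) set" where
  "wstar_cco A = \<Inter>{C. A \<subseteq> C \<and> fconvex C \<and> wstar_closed C}"

definition msum :: "('x \<Rightarrow> real) set \<Rightarrow> ('x \<Rightarrow> real) set \<Rightarrow> ('x \<Rightarrow> real) set" where
  "msum A B = {(\<lambda>y. a y + b y) | a b. a \<in> A \<and> b \<in> B}"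

definition smul_set :: "real set \<Rightarrow> ('x \<Rightarrow> real) set \<Rightarrow> ('x \<Rightarrow> real) set" where
  "smul_set \<Lambda> A = {(\<lambda>y. l * a y) | l a. l \<in> \<Lambda> \<and> a \<in> A}"

definition proper_fun :: "('x \<Rightarrow> ereal) \<Rightarrow> bool" where
  "proper_fun g \<longleftrightarrow> (\<forall>y. g y \<noteq> -\<infinity>) \<and> (\<exists>y. g y < \<infinity>)"

definition convex_fun :: "('x::real_vector \<Rightarrow> ereal) \<Rightarrow> bool" where
  "convex_fun g \<longleftrightarrow> convex {(y, r::real). g y \<le> ereal r}"

definition lsc_fun :: "('x::topological_space \<Rightarrow> ereal) \<Rightarrow> bool" where
  "lsc_fun g \<longleftrightarrow> (\<forall>c::ereal. closed {y. g y \<le> c})"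

definition eps_subdiff :: "('x::{real_vector,topological_space} \<Rightarrow> ereal) \<Rightarrow> real \<Rightarrow> 'x \<Rightarrow> ('x \<Rightarrow> real) set" where
  "eps_subdiff g \<epsilon> x =
     (if \<bar>g x\<bar> \<noteq> \<infinity> then {\<phi> \<in> dual. \<forall>y. g y \<ge> g x + ereal (\<phi> y - \<phi> x - \<epsilon>)} else {})"

end

(*
  The inclusion of the right-hand sides in the subdifferential is elementary: for every y, each
  functional in the sets on the right satisfies the subgradient inequality at x up to an error
  O(epsilon) (for the inactive indices because rho_t (f(x) - f_t(x)) <= epsilon/2; in the second
  formula the minimality of f(x) absorbs the remaining factor), and such half-space constraints
  pass to weak*-closed convex hulls.

  Conversely, let phi be a subgradient of f at x outside the hull for some epsilon. Weak*
  separation yields a direction z and a bound r < phi(z) on the hull, hence on the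
  epsilon-subgradients of the active f_t and, up to a constant, on those of the scaled inactive
  ones. A bound on the epsilon-subdifferential of g at x in direction z forces
  g(x + s z) < g(x) - epsilon/2 + s r' for some s > 0 and any r' > r (proved with affine
  minorants and a separation in the plane). So the active f_t descend below f(x) + s r' along z,
  and the inactive f_t are finite somewhere along z. Convexity and upper semicontinuity in t
  spread each such step to a neighbourhood of t, compactness of T makes it uniform, and we get
  f(x + sigma z) <= f(x) + sigma r' < f(x) + sigma phi(z), which contradicts phi being a
  subgradient.

  As X is an arbitrary locally convex space, the separations in X x R and in the dual with its
  weak* topology are derived from the Hahn-Banach theorem for sublinear functionals, applied to
  Minkowski functionals of open convex sets.
*)

theory Submission
  imports Defs "HOL-Library.Function_Algebras"
begin

section \<open>The Hahn--Banach theorem\<close>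

definition dominated_linear_graph :: "('v::real_vector \<Rightarrow> real) \<Rightarrow> ('v \<times> real) set \<Rightarrow> bool" where
  "dominated_linear_graph p H \<longleftrightarrow>
     (\<forall>u a b. (u, a) \<in> H \<longrightarrow> (u, b) \<in> H \<longrightarrow> a = b) \<and>
     (\<forall>u a w b. (u, a) \<in> H \<longrightarrow> (w, b) \<in> H \<longrightarrow> (u + w, a + b) \<in> H) \<and>
     (\<forall>u a c. (u, a) \<in> H \<longrightarrow> (c *\<^sub>R u, c * a) \<in> H) \<and>
     (\<forall>u a. (u, a) \<in> H \<longrightarrow> a \<le> p u)"

lemma dominated_linear_graphI:
  assumes "\<And>u a b. (u, a) \<in> H \<Longrightarrow> (u, b) \<in> H \<Longrightarrow> a = b"
    and "\<And>u a w b. (u, a) \<in> H \<Longrightarrow> (w, b) \<in> H \<Longrightarrow> (u + w, a + b) \<in> H"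
    and "\<And>u a c. (u, a) \<in> H \<Longrightarrow> (c *\<^sub>R u, c * a) \<in> H"
    and "\<And>u a. (u, a) \<in> H \<Longrightarrow> a \<le> p u"
  shows "dominated_linear_graph p H"
  using assms unfolding dominated_linear_graph_def by blast

lemma dominated_linear_graphD:
  assumes "dominated_linear_graph p H"
  shows dominated_linear_graph_unique: "(u, a) \<in> H \<Longrightarrow> (u, b) \<in> H \<Longrightarrow> a = b"
    and dominated_linear_graph_add: "(u, a) \<in> H \<Longrightarrow> (w, b) \<in> H \<Longrightarrow> (u + w, a + b) \<in> H"
    and dominated_linear_graph_scale: "(u, a) \<in> H \<Longrightarrow> (c *\<^sub>R u, c * a) \<in> H"
    and dominated_linear_graph_le: "(u, a) \<in> H \<Longrightarrow> a \<le> p u"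
  using assms unfolding dominated_linear_graph_def by blast+

lemma dominated_linear_graph_decomp_unique:
  assumes H: "dominated_linear_graph p H" and w: "w \<notin> fst ` H"
    and eq: "u + c *\<^sub>R w = u' + c' *\<^sub>R w" and "(u, a) \<in> H" "(u', a') \<in> H"
  shows "u = u' \<and> c = c'"
proof (rule ccontr)
  note Hfacts = dominated_linear_graphD[OF H]
  assume "\<not> (u = u' \<and> c = c')"
  then have "c \<noteq> c'" using eq by auto
  have "(c - c') *\<^sub>R w = u' - u" using eq by (simp add: algebra_simps)
  then have "(1 / (c - c')) *\<^sub>R ((c - c') *\<^sub>R w) = (1 / (c - c')) *\<^sub>R (u' - u)" by simp
  then have "w = (1 / (c - c')) *\<^sub>R (u' - u)" using \<open>c \<noteq> c'\<close> by simp
  moreover have "(u' - u, a' - a) \<in> H"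
    using Hfacts(2)[OF assms(5) Hfacts(3)[OF assms(4), of "-1"]] by simp
  ultimately have "(w, (1 / (c - c')) * (a' - a)) \<in> H" using Hfacts(3) by metis
  then show False using w by force
qed

context
  fixes p :: "'v::real_vector \<Rightarrow> real"
  assumes subadd: "\<And>x y. p (x + y) \<le> p x + p y"
    and pos_homogeneous: "\<And>c x. c \<ge> 0 \<Longrightarrow> p (c *\<^sub>R x) = c * p x"
begin

lemma dominated_linear_graph_extension_le:
  assumes H: "dominated_linear_graph p H" and "(u, a) \<in> H"
    and lower: "\<And>u a. (u, a) \<in> H \<Longrightarrow> a - p (u - w) \<le> \<beta>"
    and upper: "\<And>v b. (v, b) \<in> H \<Longrightarrow> \<beta> \<le> p (v + w) - b"
  shows "a + c * \<beta> \<le> p (u + c *\<^sub>R w)"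
proof -
  note Hfacts = dominated_linear_graphD[OF H]
  consider "c = 0" | "c > 0" | "c < 0" by linarith
  then show ?thesis
  proof cases
    case 1
    then show ?thesis using Hfacts(4)[OF \<open>(u, a) \<in> H\<close>] by simp
  next
    case 2
    have "\<beta> \<le> p ((1 / c) *\<^sub>R u + w) - (1 / c) * a"
      using upper[OF Hfacts(3)[OF \<open>(u, a) \<in> H\<close>]] .
    then have "c * \<beta> \<le> c * p ((1 / c) *\<^sub>R u + w) - a"
      using 2 by (simp add: field_simps)
    also have "c * p ((1 / c) *\<^sub>R u + w) = p (u + c *\<^sub>R w)"
      using 2 pos_homogeneous[of c "(1 / c) *\<^sub>R u + w"] by (simp add: algebra_simps)
    finally show ?thesis by simp
  next
    case 3
    have "(- 1 / c) * a - p ((- 1 / c) *\<^sub>R u - w) \<le> \<beta>"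
      using lower[OF Hfacts(3)[OF \<open>(u, a) \<in> H\<close>]] .
    then have "a - (- c) * p ((- 1 / c) *\<^sub>R u - w) \<le> (- c) * \<beta>"
      using 3 by (simp add: field_simps)
    also have "(- c) * p ((- 1 / c) *\<^sub>R u - w) = p (u + c *\<^sub>R w)"
      using 3 pos_homogeneous[of "- c" "(- 1 / c) *\<^sub>R u - w"] by (simp add: algebra_simps)
    finally show ?thesis by (simp add: algebra_simps)
  qed
qed

lemma dominated_linear_graph_extend_by:
  assumes H: "dominated_linear_graph p H" and w: "w \<notin> fst ` H"
    and lower: "\<And>u a. (u, a) \<in> H \<Longrightarrow> a - p (u - w) \<le> \<beta>"
    and upper: "\<And>v b. (v, b) \<in> H \<Longrightarrow> \<beta> \<le> p (v + w) - b"
  shows "dominated_linear_graph p {(u + c *\<^sub>R w, a + c * \<beta>) | u a c. (u, a) \<in> H}"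
    (is "dominated_linear_graph p ?H'")
proof (rule dominated_linear_graphI)
  note Hfacts = dominated_linear_graphD[OF H]
  fix u a b assume "(u, a) \<in> ?H'" "(u, b) \<in> ?H'"
  then obtain u1 a1 c1 u2 a2 c2 where "u = u1 + c1 *\<^sub>R w" "a = a1 + c1 * \<beta>" "(u1, a1) \<in> H"
    "u = u2 + c2 *\<^sub>R w" "b = a2 + c2 * \<beta>" "(u2, a2) \<in> H" by blast
  then show "a = b"
    using dominated_linear_graph_decomp_unique[OF H w, of u1 c1 u2 c2 a1 a2] Hfacts(1)[of u1 a1 a2] by auto
next
  fix u a v b assume "(u, a) \<in> ?H'" "(v, b) \<in> ?H'"
  then obtain u1 a1 c1 u2 a2 c2 where e: "u = u1 + c1 *\<^sub>R w" "a = a1 + c1 * \<beta>" "(u1, a1) \<in> H"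
    "v = u2 + c2 *\<^sub>R w" "b = a2 + c2 * \<beta>" "(u2, a2) \<in> H" by blast
  then have "u + v = (u1 + u2) + (c1 + c2) *\<^sub>R w" "a + b = (a1 + a2) + (c1 + c2) * \<beta>"
    by (simp_all add: algebra_simps)
  then show "(u + v, a + b) \<in> ?H'" using dominated_linear_graph_add[OF H e(3) e(6)] by blast
next
  fix u a k assume "(u, a) \<in> ?H'"
  then obtain u1 a1 c where e: "u = u1 + c *\<^sub>R w" "a = a1 + c * \<beta>" "(u1, a1) \<in> H" by blast
  then have "k *\<^sub>R u = k *\<^sub>R u1 + (k * c) *\<^sub>R w" "k * a = k * a1 + (k * c) * \<beta>"
    by (simp_all add: algebra_simps)
  then show "(k *\<^sub>R u, k * a) \<in> ?H'" using dominated_linear_graph_scale[OF H e(3)] by blast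
next
  fix u a assume "(u, a) \<in> ?H'"
  then show "a \<le> p u" using dominated_linear_graph_extension_le[OF H _ lower upper] by blast
qed

lemma dominated_linear_graph_extend:
  assumes H: "dominated_linear_graph p H" and "H \<noteq> {}" and w: "w \<notin> fst ` H"
  shows "\<exists>H'. dominated_linear_graph p H' \<and> H \<subset> H'"
proof -
  note Hfacts = dominated_linear_graphD[OF H]
  have gap: "a - p (u - w) \<le> p (v + w) - b" if "(u, a) \<in> H" "(v, b) \<in> H" for u a v b
  proof -
    have "a + b \<le> p (u + v)" using Hfacts(4)[OF Hfacts(2)[OF that]] .
    also have "\<dots> \<le> p (u - w) + p (v + w)" using subadd[of "u - w" "v + w"] by simp
    finally show ?thesis by simp
  qed
  obtain v0 b0 where v0: "(v0, b0) \<in> H" using \<open>H \<noteq> {}\<close> by auto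
  define S where "S = {a - p (u - w) | u a. (u, a) \<in> H}"
  have "S \<noteq> {}" "bdd_above S" unfolding S_def bdd_above_def using v0 gap[OF _ v0] by blast+
  then have lower: "a - p (u - w) \<le> Sup S" if "(u, a) \<in> H" for u a
    using that by (auto intro!: cSup_upper simp: S_def)
  have upper: "Sup S \<le> p (v + w) - b" if "(v, b) \<in> H" for v b
    using that gap \<open>S \<noteq> {}\<close> by (auto intro!: cSup_least simp: S_def)
  define H' where "H' = {(u + c *\<^sub>R w, a + c * Sup S) | u a c. (u, a) \<in> H}"
  have "dominated_linear_graph p H'"
    unfolding H'_def by (rule dominated_linear_graph_extend_by[OF H w lower upper])
  moreover have "H \<subseteq> H'"
  proof
    fix q assume "q \<in> H"
    moreover obtain u a where "q = (u, a)" by (cases q)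
    ultimately have "q = (u + 0 *\<^sub>R w, a + 0 * Sup S) \<and> (u, a) \<in> H" by simp
    then show "q \<in> H'" unfolding H'_def by blast
  qed
  moreover have "(w, Sup S) \<in> H' - H"
  proof -
    have "(0, 0) \<in> H" using Hfacts(3)[OF v0, of 0] by simp
    then have "(0 + 1 *\<^sub>R w, 0 + 1 * Sup S) \<in> H'" unfolding H'_def by blast
    then show ?thesis using w by force
  qed
  ultimately show ?thesis by blast
qed

lemma dominated_linear_graph_Union_chain:
  assumes "C \<in> chains {H. dominated_linear_graph p H}"
  shows "dominated_linear_graph p (\<Union>C)"
proof -
  have graphs: "\<And>H. H \<in> C \<Longrightarrow> dominated_linear_graph p H"
    using assms unfolding chains_def by auto
  have common: "\<exists>H\<in>C. q1 \<in> H \<and> q2 \<in> H" if "q1 \<in> \<Union>C" "q2 \<in> \<Union>C" for q1 q2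
    using that assms unfolding chains_def chain_subset_def by blast
  show ?thesis
  proof (rule dominated_linear_graphI)
    fix u a b assume "(u, a) \<in> \<Union>C" "(u, b) \<in> \<Union>C"
    then show "a = b" using common dominated_linear_graph_unique[OF graphs] by metis
  next
    fix u a w b assume "(u, a) \<in> \<Union>C" "(w, b) \<in> \<Union>C"
    then show "(u + w, a + b) \<in> \<Union>C" using common dominated_linear_graph_add[OF graphs] by blast
  qed (use dominated_linear_graph_scale[OF graphs] dominated_linear_graph_le[OF graphs] in blast)+
qed

lemma dominated_linear_graph_ray: "dominated_linear_graph p {(c *\<^sub>R v, c * p v) | c. True}"
proof (rule dominated_linear_graphI)
  have p0: "p 0 = 0" using pos_homogeneous[of 0 0] by simp
  fix u a b assume "(u, a) \<in> {(c *\<^sub>R v, c * p v) | c. True}" "(u, b) \<in> {(c *\<^sub>R v, c * p v) | c. True}"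
  then obtain c1 c2 where "u = c1 *\<^sub>R v" "a = c1 * p v" "u = c2 *\<^sub>R v" "b = c2 * p v" by blast
  then show "a = b" using p0 by (cases "v = 0") (auto simp: scaleR_cancel_right)
next
  fix u a
  assume "(u, a) \<in> {(c *\<^sub>R v, c * p v) | c. True}"
  then obtain c where c: "u = c *\<^sub>R v" "a = c * p v" by blast
  show "a \<le> p u"
  proof (cases "c \<ge> 0")
    case True
    then show ?thesis using c pos_homogeneous by simp
  next
    case False
    have "0 \<le> p (c *\<^sub>R v) + p ((- c) *\<^sub>R v)"
      using subadd[of "c *\<^sub>R v" "(- c) *\<^sub>R v"] pos_homogeneous[of 0 0]
      by (simp flip: scaleR_left_distrib)
    then show ?thesis using c False pos_homogeneous[of "- c" v] by simp
  qed
next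
  fix u a w b
  assume "(u, a) \<in> {(c *\<^sub>R v, c * p v) | c. True}" "(w, b) \<in> {(c *\<^sub>R v, c * p v) | c. True}"
  then obtain c1 c2 where "u = c1 *\<^sub>R v" "a = c1 * p v" "w = c2 *\<^sub>R v" "b = c2 * p v" by blast
  then have "u + w = (c1 + c2) *\<^sub>R v \<and> a + b = (c1 + c2) * p v" by (simp add: algebra_simps)
  then show "(u + w, a + b) \<in> {(c *\<^sub>R v, c * p v) | c. True}" by blast
next
  fix u a k
  assume "(u, a) \<in> {(c *\<^sub>R v, c * p v) | c. True}"
  then obtain c where "u = c *\<^sub>R v" "a = c * p v" by blast
  then have "k *\<^sub>R u = (k * c) *\<^sub>R v \<and> k * a = (k * c) * p v" by simp
  then show "(k *\<^sub>R u, k * a) \<in> {(c *\<^sub>R v, c * p v) | c. True}" by blast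
qed

theorem hahn_banach_sublinear:
  "\<exists>L. linear L \<and> (\<forall>x. L x \<le> p x) \<and> L v = p v"
proof -
  define A where "A = {H. dominated_linear_graph p H \<and> (v, p v) \<in> H}"
  define ray where "ray = {(c *\<^sub>R v, c * p v) | c. True}"
  have "(1 *\<^sub>R v, 1 * p v) \<in> ray" unfolding ray_def by blast
  then have ray: "ray \<in> A" unfolding A_def ray_def using dominated_linear_graph_ray by auto
  have "\<exists>U\<in>A. \<forall>X\<in>C. X \<subseteq> U" if C: "C \<in> chains A" for C
  proof (cases "C = {}")
    case True
    then show ?thesis using ray by blast
  next
    case False
    have "C \<in> chains {H. dominated_linear_graph p H}"
      using C unfolding A_def chains_def by blast
    then have "\<Union>C \<in> A"
      using C False dominated_linear_graph_Union_chain unfolding A_def chains_def by blast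
    then show ?thesis by blast
  qed
  then obtain M where M: "M \<in> A" and maximal: "\<And>X. X \<in> A \<Longrightarrow> M \<subseteq> X \<Longrightarrow> X = M"
    using Zorn_Lemma2[of A] by metis
  have graph: "dominated_linear_graph p M" and vM: "(v, p v) \<in> M" using M by (auto simp: A_def)
  note Mfacts = dominated_linear_graphD[OF graph]
  have total: "u \<in> fst ` M" for u
  proof (rule ccontr)
    assume "u \<notin> fst ` M"
    then obtain H' where "dominated_linear_graph p H'" "M \<subset> H'"
      using dominated_linear_graph_extend[OF graph _ ] vM by blast
    then show False using maximal[of H'] vM by (auto simp: A_def)
  qed
  define L where "L u = (THE a. (u, a) \<in> M)" for u
  have L_eq: "L u = a" if "(u, a) \<in> M" for u a
    unfolding L_def by (rule the_equality) (use that Mfacts(1) in blast)+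
  have LM: "(u, L u) \<in> M" for u
  proof -
    obtain a where "(u, a) \<in> M" using total[of u] by force
    then show ?thesis using L_eq by simp
  qed
  have "linear L"
  proof
    show "L (x + y) = L x + L y" for x y by (rule L_eq[OF Mfacts(2)[OF LM LM]])
    show "L (c *\<^sub>R x) = c *\<^sub>R L x" for c x using L_eq[OF Mfacts(3)[OF LM]] by simp
  qed
  moreover have "\<forall>x. L x \<le> p x" using Mfacts(4)[OF LM] by blast
  ultimately show ?thesis using L_eq[OF vM] by blast
qed

end

section \<open>The Minkowski functional of a convex absorbing set\<close>

definition minkowski_functional :: "'v::real_vector set \<Rightarrow> 'v \<Rightarrow> real" where
  "minkowski_functional D v = Inf {t. 0 < t \<and> (1 / t) *\<^sub>R v \<in> D}"

lemma convex_scaleR_mem: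
  assumes "convex D" "0 \<in> D" "d \<in> D" "0 \<le> l" "l \<le> 1"
  shows "l *\<^sub>R d \<in> D"
  using convexD[OF assms(1) assms(3) assms(2), of l "1 - l"] assms(4,5) by simp

context
  fixes D :: "'v::real_vector set"
  assumes convex: "convex D" and zero: "0 \<in> D" and absorbing: "\<And>v. \<exists>s>0. s *\<^sub>R v \<in> D"
begin

lemma minkowski_functional_set_nonempty: "{t. 0 < t \<and> (1 / t) *\<^sub>R v \<in> D} \<noteq> {}"
proof -
  obtain s where "s > 0" "s *\<^sub>R v \<in> D" using absorbing by blast
  then have "1 / s \<in> {t. 0 < t \<and> (1 / t) *\<^sub>R v \<in> D}" by simp
  then show ?thesis by blast
qed

lemma minkowski_functional_le:
  assumes "0 < t" "(1 / t) *\<^sub>R v \<in> D"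
  shows "minkowski_functional D v \<le> t"
  unfolding minkowski_functional_def by (rule cInf_lower) (use assms in \<open>auto intro: bdd_belowI[of _ 0]\<close>)

lemma minkowski_functional_lt_imp_mem:
  assumes "minkowski_functional D v < t"
  shows "0 < t \<and> (1 / t) *\<^sub>R v \<in> D"
proof -
  obtain s where s: "0 < s" "(1 / s) *\<^sub>R v \<in> D" "s < t"
    using cInf_lessD[OF minkowski_functional_set_nonempty assms[unfolded minkowski_functional_def]]
    by blast
  have "(s / t) *\<^sub>R ((1 / s) *\<^sub>R v) \<in> D"
    by (rule convex_scaleR_mem[OF convex zero s(2)]) (use s in simp_all)
  then show ?thesis using s by simp
qed

lemma minkowski_functional_le_one: "v \<in> D \<Longrightarrow> minkowski_functional D v \<le> 1"
  by (rule minkowski_functional_le) simp_all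

lemma minkowski_functional_ge_one:
  assumes "v \<notin> D"
  shows "1 \<le> minkowski_functional D v"
  unfolding minkowski_functional_def
proof (rule cInf_greatest[OF minkowski_functional_set_nonempty])
  fix t assume t: "t \<in> {t. 0 < t \<and> (1 / t) *\<^sub>R v \<in> D}"
  show "1 \<le> t"
  proof (rule ccontr)
    assume "\<not> 1 \<le> t"
    then have "t *\<^sub>R ((1 / t) *\<^sub>R v) \<in> D"
      using convex_scaleR_mem[OF convex zero, of "(1 / t) *\<^sub>R v" t] t by simp
    then show False using assms t by simp
  qed
qed

lemma minkowski_functional_scaleR_le:
  assumes c: "0 < c"
  shows "minkowski_functional D (c *\<^sub>R v) \<le> c * minkowski_functional D v"
proof (rule field_le_epsilon)
  fix e :: real assume "e > 0"
  define t where "t = minkowski_functional D v + e / c"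
  have t: "0 < t" "(1 / t) *\<^sub>R v \<in> D"
    using minkowski_functional_lt_imp_mem[of v t] \<open>e > 0\<close> c by (auto simp: t_def)
  have "(1 / (c * t)) *\<^sub>R (c *\<^sub>R v) = (1 / t) *\<^sub>R v" using c by simp
  then have "minkowski_functional D (c *\<^sub>R v) \<le> c * t"
    using t c by (intro minkowski_functional_le) simp_all
  then show "minkowski_functional D (c *\<^sub>R v) \<le> c * minkowski_functional D v + e"
    using c by (simp add: t_def algebra_simps)
qed

lemma minkowski_functional_pos_homogeneous:
  assumes "0 \<le> c"
  shows "minkowski_functional D (c *\<^sub>R v) = c * minkowski_functional D v"
proof (cases "c = 0")
  case True
  have "{t. 0 < t \<and> (1 / t) *\<^sub>R (0::'v) \<in> D} = {0<..}" using zero by auto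
  then show ?thesis using True by (simp add: minkowski_functional_def)
next
  case False
  then have c: "0 < c" using assms by simp
  have "minkowski_functional D v = minkowski_functional D ((1 / c) *\<^sub>R (c *\<^sub>R v))" using c by simp
  also have "\<dots> \<le> (1 / c) * minkowski_functional D (c *\<^sub>R v)"
    by (rule minkowski_functional_scaleR_le) (use c in simp)
  finally have "c * minkowski_functional D v \<le> minkowski_functional D (c *\<^sub>R v)"
    using c by (simp add: field_simps)
  then show ?thesis using minkowski_functional_scaleR_le[OF c, of v] by linarith
qed

lemma minkowski_functional_subadditive:
  "minkowski_functional D (x + y) \<le> minkowski_functional D x + minkowski_functional D y"
proof (rule field_le_epsilon)
  fix e :: real assume e: "e > 0"
  define s where "s = minkowski_functional D x + e / 2"
  define t where "t = minkowski_functional D y + e / 2"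
  have s: "0 < s" "(1 / s) *\<^sub>R x \<in> D" using minkowski_functional_lt_imp_mem[of x s] e s_def by auto
  have t: "0 < t" "(1 / t) *\<^sub>R y \<in> D" using minkowski_functional_lt_imp_mem[of y t] e t_def by auto
  have "(s / (s + t)) *\<^sub>R ((1 / s) *\<^sub>R x) + (t / (s + t)) *\<^sub>R ((1 / t) *\<^sub>R y) \<in> D"
    using convexD[OF convex s(2) t(2), of "s / (s + t)" "t / (s + t)"] s t
    by (simp add: add_divide_distrib[symmetric])
  moreover have "(s / (s + t)) *\<^sub>R ((1 / s) *\<^sub>R x) + (t / (s + t)) *\<^sub>R ((1 / t) *\<^sub>R y)
      = (1 / (s + t)) *\<^sub>R (x + y)"
    using s t by (simp add: scaleR_add_right)
  ultimately have "minkowski_functional D (x + y) \<le> s + t"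
    using s t by (intro minkowski_functional_le) simp_all
  then show "minkowski_functional D (x + y) \<le> minkowski_functional D x + minkowski_functional D y + e"
    using s_def t_def by simp
qed

end

section \<open>Separation in locally convex spaces\<close>

text \<open>This is \<^const>\<open>lcs_space\<close> without the Hausdorff requirement, so that it also applies
  to the function space carrying the product topology.\<close>
definition locally_convex :: "'v::{real_vector,topological_space} itself \<Rightarrow> bool" where
  "locally_convex _ \<longleftrightarrow>
     continuous_on UNIV (\<lambda>(u::'v, v::'v). u + v) \<and>
     continuous_on UNIV (\<lambda>(c::real, v::'v). c *\<^sub>R v) \<and>
     (\<forall>U::'v set. open U \<and> 0 \<in> U \<longrightarrow> (\<exists>V. open V \<and> convex V \<and> 0 \<in> V \<and> V \<subseteq> U))"

lemma lcs_space_imp_locally_convex: "lcs_space TYPE('x::{real_vector,t2_space}) \<Longrightarrow> locally_convex TYPE('x)"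
  unfolding lcs_space_def locally_convex_def by blast

context
  assumes lc: "locally_convex TYPE('v::{real_vector,topological_space})"
begin

lemma continuous_on_add_lc: "continuous_on UNIV (\<lambda>(u::'v, v::'v). u + v)"
  and continuous_on_scaleR_lc: "continuous_on UNIV (\<lambda>(c::real, v::'v). c *\<^sub>R v)"
  and convex_open_nhd_lc: "open (U::'v set) \<Longrightarrow> 0 \<in> U \<Longrightarrow> \<exists>V. open V \<and> convex V \<and> 0 \<in> V \<and> V \<subseteq> U"
  using lc unfolding locally_convex_def by blast+

lemma continuous_on_translation_lc: "continuous_on UNIV (\<lambda>v::'v. a + v)"
  using continuous_on_compose2[OF continuous_on_add_lc continuous_on_Pair[OF continuous_on_const continuous_on_id]]
  by simp

lemma continuous_on_scaling_lc: "continuous_on UNIV (\<lambda>v::'v. c *\<^sub>R v)"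
  using continuous_on_compose2[OF continuous_on_scaleR_lc continuous_on_Pair[OF continuous_on_const continuous_on_id]]
  by simp

lemma continuous_on_ray_lc: "continuous_on UNIV (\<lambda>c::real. c *\<^sub>R (v::'v))"
  using continuous_on_compose2[OF continuous_on_scaleR_lc continuous_on_Pair[OF continuous_on_id continuous_on_const]]
  by simp

lemma open_translation_image_lc: "open (U::'v set) \<Longrightarrow> open ((+) a ` U)"
proof -
  have "(+) a ` U = (\<lambda>v. - a + v) -` U" by (force simp: image_iff algebra_simps)
  then show "open U \<Longrightarrow> open ((+) a ` U)" using open_vimage continuous_on_translation_lc by metis
qed

lemma open_scaling_image_lc: "c \<noteq> 0 \<Longrightarrow> open (U::'v set) \<Longrightarrow> open ((\<lambda>v. c *\<^sub>R v) ` U)"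
proof -
  assume "c \<noteq> 0" "open U"
  then have "(\<lambda>v. c *\<^sub>R v) ` U = (\<lambda>v. (1 / c) *\<^sub>R v) -` U"
    by (force simp: image_iff intro: exI[of _ "(1 / c) *\<^sub>R _"])
  then show ?thesis using open_vimage[OF \<open>open U\<close> continuous_on_scaling_lc] by metis
qed

lemma open_absorbing_lc:
  assumes "open (U::'v set)" "0 \<in> U"
  shows "\<exists>\<delta>>0. \<forall>s. \<bar>s\<bar> < \<delta> \<longrightarrow> s *\<^sub>R v \<in> U"
proof -
  have "open ((\<lambda>c::real. c *\<^sub>R v) -` U)" "0 \<in> (\<lambda>c::real. c *\<^sub>R v) -` U"
    using open_vimage[OF assms(1) continuous_on_ray_lc] assms(2) by auto
  then obtain \<delta> where "\<delta> > 0" "ball 0 \<delta> \<subseteq> (\<lambda>c::real. c *\<^sub>R v) -` U"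
    using open_contains_ball by blast
  then show ?thesis by (intro exI[of _ \<delta>]) (auto simp: subset_iff dist_real_def)
qed

lemma absorbing_open_lc:
  assumes "open (U::'v set)" "0 \<in> U"
  shows "\<exists>s>0. s *\<^sub>R v \<in> U"
proof -
  obtain \<delta> where "\<delta> > 0" "\<forall>s. \<bar>s\<bar> < \<delta> \<longrightarrow> s *\<^sub>R v \<in> U" using open_absorbing_lc[OF assms] by blast
  then show ?thesis by (intro exI[of _ "\<delta> / 2"]) auto
qed

lemma linear_continuous_if_bounded_on_open:
  assumes L: "linear (L::'v \<Rightarrow> real)" and N: "open N" "0 \<in> N" and bound: "\<And>v. v \<in> N \<Longrightarrow> L v \<le> 1"
  shows "continuous_on UNIV L"
proof -
  define N' where "N' = N \<inter> (\<lambda>v. (- 1) *\<^sub>R v) ` N"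
  have N': "open N'" "0 \<in> N'" unfolding N'_def using open_scaling_image_lc[of "- 1" N] N by force+
  have abs_bound: "\<bar>L v\<bar> \<le> 1" if v: "v \<in> N'" for v
  proof -
    obtain w where "v \<in> N" "w \<in> N" "v = (- 1) *\<^sub>R w" using v unfolding N'_def by blast
    then have "L v = - L w" using linear_scale[OF L, of "- 1" w] by simp
    then show ?thesis using bound[OF \<open>v \<in> N\<close>] bound[OF \<open>w \<in> N\<close>] by (simp add: abs_le_iff)
  qed
  have "open (L -` B)" if B: "open B" for B
  proof (subst open_subopen, intro ballI)
    fix v0 assume "v0 \<in> L -` B"
    then obtain \<eta> where \<eta>: "\<eta> > 0" "ball (L v0) \<eta> \<subseteq> B" using B open_contains_ball by blast
    define W where "W = (+) v0 ` ((\<lambda>v. (\<eta> / 2) *\<^sub>R v) ` N')"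
    have "open W" unfolding W_def using open_translation_image_lc open_scaling_image_lc N' \<eta> by simp
    moreover have "v0 \<in> W" unfolding W_def using N' by (auto simp: image_iff intro!: bexI[of _ 0])
    moreover have "W \<subseteq> L -` B"
    proof
      fix u assume "u \<in> W"
      then obtain n where n: "n \<in> N'" "u = v0 + (\<eta> / 2) *\<^sub>R n" unfolding W_def by auto
      have "L u = L v0 + (\<eta> / 2) * L n" using n linear_add[OF L] linear_scale[OF L] by simp
      moreover have "\<bar>(\<eta> / 2) * L n\<bar> \<le> \<eta> / 2"
        using abs_bound[OF n(1)] \<eta> by (simp add: abs_mult mult_left_le)
      ultimately show "u \<in> L -` B" using \<eta> by (auto simp: dist_real_def)
    qed
    ultimately show "\<exists>W. open W \<and> v0 \<in> W \<and> W \<subseteq> L -` B" by blast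
  qed
  then show ?thesis using continuous_on_open_vimage[OF open_UNIV] by auto
qed

lemma separation_open_convex_zero:
  assumes D: "convex (D::'v set)" "open D" "0 \<in> D" and q: "q \<notin> D"
  shows "\<exists>L::'v \<Rightarrow> real. linear L \<and> continuous_on UNIV L \<and> (\<forall>v\<in>D. L v \<le> 1) \<and> 1 \<le> L q"
proof -
  note minkowski = minkowski_functional_subadditive[OF D(1,3)] minkowski_functional_pos_homogeneous[OF D(1,3)]
    minkowski_functional_le_one[OF D(1,3)] minkowski_functional_ge_one[OF D(1,3)]
  have absorbing: "\<And>v. \<exists>s>0. s *\<^sub>R v \<in> D" using absorbing_open_lc[OF D(2,3)] .
  obtain L where L: "linear L" "\<And>v. L v \<le> minkowski_functional D v" "L q = minkowski_functional D q"
    using hahn_banach_sublinear[of "minkowski_functional D" q] minkowski[OF absorbing] by blast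
  have "\<forall>v\<in>D. L v \<le> 1" using L(2) minkowski(3)[OF absorbing] by (meson order_trans)
  moreover have "1 \<le> L q" using L(3) minkowski(4)[OF absorbing q] by simp
  moreover have "continuous_on UNIV L"
    by (rule linear_continuous_if_bounded_on_open[OF L(1) D(2,3)]) (use calculation in blast)
  ultimately show ?thesis using L(1) by blast
qed

theorem separation_open_convex:
  assumes E: "convex (E::'v set)" and Ob: "open Ob" "p \<in> Ob" "Ob \<inter> E = {}"
  shows "\<exists>L::'v \<Rightarrow> real. linear L \<and> continuous_on UNIV L \<and> (\<exists>m. (\<forall>e\<in>E. L e \<le> m) \<and> m < L p)"
proof (cases "E = {}")
  case True
  then show ?thesis
    by (intro exI[of _ "\<lambda>_. 0"] conjI linear_zero continuous_on_const exI[of _ "- 1"]) auto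
next
  case False
  then obtain e0 where e0: "e0 \<in> E" by blast
  have "open ((+) (- p) ` Ob)" by (rule open_translation_image_lc[OF Ob(1)])
  moreover have "0 \<in> (+) (- p) ` Ob" using Ob(2) by (auto simp: image_iff intro!: bexI[of _ p])
  ultimately obtain V where V: "open V" "convex V" "0 \<in> V" "V \<subseteq> (+) (- p) ` Ob"
    using convex_open_nhd_lc by blast
  define D where "D = (+) (- e0) ` (\<Union>e\<in>E. \<Union>v\<in>V. {e - v})"
  have D_iff: "d \<in> D \<longleftrightarrow> (\<exists>e\<in>E. \<exists>v\<in>V. d = - e0 + (e - v))" for d
    unfolding D_def by auto
  have "convex D"
    unfolding D_def by (intro convex_translation convex_differences E V(2))
  moreover have "open D"
  proof -
    have "D = (\<Union>e\<in>E. (+) (e - e0) ` ((\<lambda>v. (- 1) *\<^sub>R v) ` V))"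
      by (rule set_eqI, unfold D_iff) (auto simp: image_iff algebra_simps)
    then show ?thesis
      using open_scaling_image_lc[OF _ V(1), of "- 1"] by (auto intro!: open_UN open_translation_image_lc)
  qed
  moreover have "0 \<in> D" unfolding D_iff using e0 V(3) by force
  moreover have "p - e0 \<notin> D" unfolding D_iff using V(4) Ob(3) by (force simp: algebra_simps)
  ultimately obtain L :: "'v \<Rightarrow> real"
    where L: "linear L" "continuous_on UNIV L" "\<And>d. d \<in> D \<Longrightarrow> L d \<le> 1" "1 \<le> L (p - e0)"
    using separation_open_convex_zero by blast
  have below: "L e \<le> L (p + v)" if "e \<in> E" "v \<in> V" for e v
  proof -
    have "L (- e0 + (e - v)) \<le> 1" using L(3) that unfolding D_iff by blast
    then show ?thesis using L(4) linear_add[OF L(1)] linear_diff[OF L(1)] linear_neg[OF L(1)] by simp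
  qed
  obtain \<delta> where \<delta>: "\<delta> > 0" "\<And>s. \<bar>s\<bar> < \<delta> \<Longrightarrow> s *\<^sub>R (e0 - p) \<in> V"
    using open_absorbing_lc[OF V(1,3)] by blast
  have "L (p + (\<delta> / 2) *\<^sub>R (e0 - p)) = L p - (\<delta> / 2) * L (p - e0)"
    by (simp only: linear_add[OF L(1)] linear_scale[OF L(1)]) (simp add: linear_diff[OF L(1)] field_simps)
  also have "\<dots> < L p" using L(4) \<delta>(1) by simp
  finally show ?thesis using below[OF _ \<delta>(2)] \<delta>(1) L(1,2) by (intro exI[of _ L]) force
qed

end

section \<open>The weak* topology\<close>

instantiation "fun" :: (type, real_vector) real_vector
begin

definition scaleR_fun :: "real \<Rightarrow> ('a \<Rightarrow> 'b) \<Rightarrow> 'a \<Rightarrow> 'b" where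
  "scaleR_fun c f = (\<lambda>x. c *\<^sub>R f x)"

instance by standard (simp_all add: scaleR_fun_def fun_eq_iff scaleR_add_right scaleR_add_left)

end

lemma scaleR_fun_apply [simp]: "(c *\<^sub>R f) x = c *\<^sub>R f x"
  by (simp add: scaleR_fun_def)

lemma sum_fun_apply: "finite I \<Longrightarrow> (\<Sum>i\<in>I. g i) x = (\<Sum>i\<in>I. g i x)"
  by (induction I rule: finite_induct) auto

lemma locally_convex_prod_real:
  assumes lc: "locally_convex TYPE('v::{real_vector,topological_space})"
  shows "locally_convex TYPE('v \<times> real)"
  unfolding locally_convex_def
proof (intro conjI allI impI)
  have "continuous_on UNIV ((\<lambda>(u, v). u + v) \<circ> (\<lambda>P::('v \<times> real) \<times> ('v \<times> real). (fst (fst P), fst (snd P))))"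
    by (rule continuous_on_compose) (auto intro!: continuous_intros continuous_on_subset[OF continuous_on_add_lc[OF lc]])
  then have "continuous_on UNIV (\<lambda>P::('v \<times> real) \<times> ('v \<times> real).
      (fst (fst P) + fst (snd P), snd (fst P) + snd (snd P)))"
    by (intro continuous_intros) (simp add: comp_def)
  then show "continuous_on UNIV (\<lambda>(u::'v \<times> real, v). u + v)"
    by (simp add: case_prod_beta plus_prod_def)
next
  have "continuous_on UNIV ((\<lambda>(c, v). c *\<^sub>R v) \<circ> (\<lambda>P::real \<times> ('v \<times> real). (fst P, fst (snd P))))"
    by (rule continuous_on_compose) (auto intro!: continuous_intros continuous_on_subset[OF continuous_on_scaleR_lc[OF lc]])
  then have "continuous_on UNIV (\<lambda>P::real \<times> ('v \<times> real). (fst P *\<^sub>R fst (snd P), fst P * snd (snd P)))"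
    by (intro continuous_intros) (simp add: comp_def)
  then show "continuous_on UNIV (\<lambda>(c::real, v::'v \<times> real). c *\<^sub>R v)"
    by (simp add: case_prod_beta scaleR_prod_def)
next
  fix U :: "('v \<times> real) set" assume "open U \<and> 0 \<in> U"
  then obtain A B where "open A" "open B" "(0, 0) \<in> A \<times> B" "A \<times> B \<subseteq> U"
    using open_prod_elim[of U 0] by (auto simp: zero_prod_def)
  then have AB: "open A" "open B" "0 \<in> A" "0 \<in> B" "A \<times> B \<subseteq> U" by auto
  obtain V where V: "open V" "convex V" "0 \<in> V" "V \<subseteq> A" using convex_open_nhd_lc[OF lc AB(1,3)] by blast
  obtain r where r: "r > 0" "ball 0 r \<subseteq> B" using AB(2,4) open_contains_ball by blast
  show "\<exists>W. open W \<and> convex W \<and> 0 \<in> W \<and> W \<subseteq> U"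
    using V r AB by (intro exI[of _ "V \<times> ball 0 r"]) (auto simp: open_Times convex_Times zero_prod_def)
qed

lemma convex_open_nhd_fun:
  assumes "open (U :: ('a \<Rightarrow> real) set)" "0 \<in> U"
  shows "\<exists>V. open V \<and> convex V \<and> 0 \<in> V \<and> V \<subseteq> U"
proof -
  obtain X where X: "0 \<in> (\<Pi>\<^sub>E i\<in>UNIV. X i)" "\<And>i. open (X i)" "finite {i. X i \<noteq> UNIV}"
      "(\<Pi>\<^sub>E i\<in>UNIV. X i) \<subseteq> U"
    using product_topology_open_contains_basis[of "(\<lambda>i. euclidean)" UNIV U 0] assms
    by (auto simp: open_fun_def)
  have "0 \<in> X i" for i using X(1) by (auto simp: PiE_iff)
  then have "\<forall>i. \<exists>r>0. ball 0 r \<subseteq> X i" using X(2) open_contains_ball by blast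
  then obtain r where r: "\<And>i. r i > 0" "\<And>i. ball 0 (r i) \<subseteq> X i" by metis
  define Y where "Y i = (if X i = UNIV then UNIV else ball (0::real) (r i))" for i
  have "open (\<Pi>\<^sub>E i\<in>UNIV. Y i)"
    by (rule open_PiE) (use X(3) in \<open>auto simp: Y_def\<close>)
  moreover have "convex (\<Pi>\<^sub>E i\<in>UNIV. Y i)"
  proof (rule convexI)
    fix f g :: "'a \<Rightarrow> real" and u v :: real
    assume "f \<in> (\<Pi>\<^sub>E i\<in>UNIV. Y i)" "g \<in> (\<Pi>\<^sub>E i\<in>UNIV. Y i)" "0 \<le> u" "0 \<le> v" "u + v = 1"
    then have "u *\<^sub>R f i + v *\<^sub>R g i \<in> Y i" for i
      using convexD[of "Y i" "f i" "g i" u v] by (auto simp: Y_def PiE_iff)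
    then show "u *\<^sub>R f + v *\<^sub>R g \<in> (\<Pi>\<^sub>E i\<in>UNIV. Y i)" by (simp add: PiE_iff)
  qed
  moreover have "0 \<in> (\<Pi>\<^sub>E i\<in>UNIV. Y i)" using r(1) by (simp add: Y_def PiE_iff)
  moreover have "(\<Pi>\<^sub>E i\<in>UNIV. Y i) \<subseteq> U"
  proof
    fix f assume f: "f \<in> (\<Pi>\<^sub>E i\<in>UNIV. Y i)"
    have "f i \<in> X i" for i
    proof -
      have "f i \<in> Y i" using f by (simp add: PiE_iff)
      then show ?thesis using r(2)[of i] by (auto simp: Y_def split: if_splits)
    qed
    then show "f \<in> U" using X(4) by (auto simp: PiE_iff)
  qed
  ultimately show ?thesis by blast
qed

lemma locally_convex_fun: "locally_convex TYPE('a \<Rightarrow> real)"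
  unfolding locally_convex_def
proof (intro conjI allI impI)
  have coordinate: "continuous_on UNIV (\<lambda>x::'a \<Rightarrow> real. x i)" for i by simp
  show "continuous_on UNIV (\<lambda>(u::'a \<Rightarrow> real, v). u + v)"
  proof (rule continuous_on_coordinatewise_then_product)
    fix i
    have "continuous_on UNIV (\<lambda>P::('a \<Rightarrow> real) \<times> ('a \<Rightarrow> real). fst P i + snd P i)"
      by (intro continuous_intros continuous_on_compose2[OF coordinate]) auto
    then show "continuous_on UNIV (\<lambda>P. (case P of (u::'a \<Rightarrow> real, v) \<Rightarrow> u + v) i)"
      by (simp add: case_prod_beta)
  qed
  show "continuous_on UNIV (\<lambda>(c::real, v::'a \<Rightarrow> real). c *\<^sub>R v)"
  proof (rule continuous_on_coordinatewise_then_product)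
    fix i
    have "continuous_on UNIV (\<lambda>P::real \<times> ('a \<Rightarrow> real). fst P * snd P i)"
      by (intro continuous_intros continuous_on_compose2[OF coordinate]) auto
    then show "continuous_on UNIV (\<lambda>P. (case P of (c::real, v::'a \<Rightarrow> real) \<Rightarrow> c *\<^sub>R v) i)"
      by (simp add: case_prod_beta)
  qed
qed (use convex_open_nhd_fun in blast)

lemma dual_linear: "a \<in> dual \<Longrightarrow> linear a"
  by (simp add: dual_def)

lemma dual_add: "a \<in> dual \<Longrightarrow> b \<in> dual \<Longrightarrow> (\<lambda>y. a y + b y) \<in> dual"
  unfolding dual_def
  by (auto intro!: linearI continuous_intros simp: linear_add linear_scale algebra_simps)

lemma dual_cmult: "a \<in> dual \<Longrightarrow> (\<lambda>y. k * a y) \<in> dual"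
  unfolding dual_def
  by (auto intro!: linearI continuous_intros simp: linear_add linear_scale algebra_simps)

lemma dual_zero: "(\<lambda>_. 0) \<in> dual"
  unfolding dual_def by (auto intro: linearI)

lemma fconvex_dual: "fconvex dual"
  unfolding fconvex_def by (auto intro!: dual_add dual_cmult)

lemma fconvex_imp_convex: "fconvex C \<Longrightarrow> convex (C :: ('a \<Rightarrow> real) set)"
  unfolding fconvex_def convex_alt by (simp add: scaleR_fun_def plus_fun_def)

lemma wstar_cco_least: "A \<subseteq> C \<Longrightarrow> fconvex C \<Longrightarrow> wstar_closed C \<Longrightarrow> wstar_cco A \<subseteq> C"
  unfolding wstar_cco_def by blast

lemma wstar_cco_subset_halfspace:
  assumes "A \<subseteq> {\<psi> \<in> dual. \<psi> z \<le> b}"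
  shows "wstar_cco A \<subseteq> {\<psi> \<in> dual. \<psi> z \<le> b}"
proof (rule wstar_cco_least[OF assms])
  show "fconvex {\<psi> \<in> dual. \<psi> z \<le> b}"
    unfolding fconvex_def
  proof (intro ballI allI impI CollectI conjI)
    fix p q :: "'a \<Rightarrow> real" and u :: real
    assume "p \<in> {\<psi> \<in> dual. \<psi> z \<le> b}" "q \<in> {\<psi> \<in> dual. \<psi> z \<le> b}" "0 \<le> u \<and> u \<le> 1"
    then show "(\<lambda>y. (1 - u) * p y + u * q y) \<in> dual" "(1 - u) * p z + u * q z \<le> b"
      using fconvex_dual convex_bound_le[of "p z" b "q z" "1 - u" u] unfolding fconvex_def by auto
  qed
  have "closed {\<psi>::'a \<Rightarrow> real. \<psi> z \<le> b}"
    by (intro closed_Collect_le continuous_intros continuous_on_product_coordinates)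
  then show "wstar_closed {\<psi> \<in> dual. \<psi> z \<le> b}"
    unfolding wstar_closed_def closedin_closed by (auto intro!: exI[of _ "{\<psi>::'a \<Rightarrow> real. \<psi> z \<le> b}"])
qed

lemma continuous_linear_on_fun_eq_sum:
  assumes L: "linear (L :: ('a \<Rightarrow> real) \<Rightarrow> real)" and cont: "continuous_on UNIV L"
  shows "\<exists>I w. finite I \<and> (\<forall>\<psi>. L \<psi> = (\<Sum>i\<in>I. w i * \<psi> i))"
proof -
  have "open (L -` {- 1<..<1})" using open_vimage[OF _ cont] by simp
  then obtain X where X: "0 \<in> (\<Pi>\<^sub>E i\<in>UNIV. X i)" "finite {i. X i \<noteq> UNIV}"
      "(\<Pi>\<^sub>E i\<in>UNIV. X i) \<subseteq> L -` {- 1<..<1}"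
    using product_topology_open_contains_basis[of "(\<lambda>i. euclidean)" UNIV "L -` {- 1<..<1}" 0]
      linear_0[OF L] by (auto simp: open_fun_def)
  define I where "I = {i. X i \<noteq> UNIV}"
  have "finite I" using X(2) I_def by simp
  \<comment> \<open>being bounded on a basic neighbourhood, \<open>L\<close> only depends on the finitely many coordinates in \<open>I\<close>\<close>
  have vanish: "L \<psi> = 0" if "\<forall>i\<in>I. \<psi> i = 0" for \<psi> :: "'a \<Rightarrow> real"
  proof (rule ccontr)
    assume ne: "L \<psi> \<noteq> 0"
    have "((2 / L \<psi>) *\<^sub>R \<psi>) i \<in> X i" for i
      using that X(1) by (cases "i \<in> I") (auto simp: PiE_iff I_def)
    then have "(2 / L \<psi>) *\<^sub>R \<psi> \<in> (\<Pi>\<^sub>E i\<in>UNIV. X i)" by (simp add: PiE_iff)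
    then have "(2 / L \<psi>) *\<^sub>R \<psi> \<in> L -` {- 1<..<1}" by (rule subsetD[OF X(3)])
    then have "L ((2 / L \<psi>) *\<^sub>R \<psi>) < 1" by simp
    then show False using linear_scale[OF L] ne by simp
  qed
  define e where "e i = (\<lambda>j::'a. if j = i then 1 else 0 :: real)" for i
  have repr: "L \<psi> = (\<Sum>i\<in>I. L (e i) * \<psi> i)" for \<psi>
  proof -
    define \<psi>' where "\<psi>' = (\<Sum>i\<in>I. \<psi> i *\<^sub>R e i)"
    have "\<psi>' j = (if j \<in> I then \<psi> j else 0)" for j
      using \<open>finite I\<close> by (simp add: \<psi>'_def sum_fun_apply e_def if_distrib cong: if_cong)
    then have "L (\<psi> - \<psi>') = 0" by (intro vanish) simp
    then have "L \<psi> = L \<psi>'" using linear_diff[OF L] by simp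
    also have "\<dots> = (\<Sum>i\<in>I. \<psi> i * L (e i))"
      unfolding \<psi>'_def by (simp add: linear_sum[OF L] linear_scale[OF L])
    finally show ?thesis by (simp add: mult_ac)
  qed
  show ?thesis by (intro exI[of _ I] exI[of _ "\<lambda>i. L (e i)"] conjI allI \<open>finite I\<close> repr)
qed

theorem wstar_separation:
  assumes A: "A \<subseteq> dual" and \<phi>: "\<phi> \<in> dual" and notin: "\<phi> \<notin> wstar_cco A"
  shows "\<exists>z r. (\<forall>a\<in>A. a z \<le> r) \<and> r < \<phi> z"
proof -
  obtain C where C: "A \<subseteq> C" "fconvex C" "C \<subseteq> dual" "closedin (top_of_set dual) C" "\<phi> \<notin> C"
    using notin unfolding wstar_cco_def wstar_closed_def by blast
  then obtain Ob where Ob: "open Ob" "dual - C = dual \<inter> Ob"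
    using openin_diff[OF openin_topspace C(4)] unfolding openin_open by auto
  have "\<phi> \<in> Ob" "Ob \<inter> C = {}" using Ob \<phi> C(3,5) by blast+
  then obtain L :: "('a \<Rightarrow> real) \<Rightarrow> real" and m
    where L: "linear L" "continuous_on UNIV L" "\<And>c. c \<in> C \<Longrightarrow> L c \<le> m" "m < L \<phi>"
    using separation_open_convex[OF locally_convex_fun fconvex_imp_convex[OF C(2)] Ob(1)] by blast
  obtain I w where I: "finite I" "\<And>\<psi>. L \<psi> = (\<Sum>i\<in>I. w i * \<psi> i)"
    using continuous_linear_on_fun_eq_sum[OF L(1,2)] by blast
  define z where "z = (\<Sum>i\<in>I. w i *\<^sub>R i)"
  have L_eval: "L \<psi> = \<psi> z" if "\<psi> \<in> dual" for \<psi>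
    using dual_linear[OF that] by (simp add: z_def I(2) linear_sum linear_scale)
  have "a z \<le> m" if "a \<in> A" for a
  proof -
    have "a \<in> C" "a \<in> dual" using that A C(1) by auto
    then show ?thesis using L(3) L_eval by fastforce
  qed
  then show ?thesis using L(4) L_eval[OF \<phi>] by auto
qed

lemma wstar_closed_dual: "wstar_closed dual"
  by (simp add: wstar_closed_def)

lemma msum_subset_dual: "A \<subseteq> dual \<Longrightarrow> B \<subseteq> dual \<Longrightarrow> msum A B \<subseteq> dual"
  unfolding msum_def by (auto intro: dual_add)

lemma smul_set_subset_dual: "A \<subseteq> dual \<Longrightarrow> smul_set \<Lambda> A \<subseteq> dual"
  unfolding smul_set_def by (auto intro: dual_cmult)

lemma msumI: "a \<in> A \<Longrightarrow> b \<in> B \<Longrightarrow> (\<lambda>y. a y + b y) \<in> msum A B"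
  unfolding msum_def by blast

lemma smul_setI: "l \<in> \<Lambda> \<Longrightarrow> a \<in> A \<Longrightarrow> (\<lambda>y. l * a y) \<in> smul_set \<Lambda> A"
  unfolding smul_set_def by blast

section \<open>Affine minorants of convex functions\<close>

definition affine_minorant :: "('x::{real_vector,topological_space} \<Rightarrow> ereal) \<Rightarrow> ('x \<Rightarrow> real) \<Rightarrow> real \<Rightarrow> bool" where
  "affine_minorant g a c \<longleftrightarrow> a \<in> dual \<and> (\<forall>y. ereal (a y + c) \<le> g y)"

lemma affine_minorant_le: "affine_minorant g a c \<Longrightarrow> ereal (a y + c) \<le> g y"
  by (simp add: affine_minorant_def)

lemma proper_funD: "proper_fun g \<Longrightarrow> g y \<noteq> - \<infinity>"
  by (simp add: proper_fun_def)

lemma open_nhd_disjoint_epigraph: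
  assumes lsc: "lsc_fun g" and below: "ereal l0 < g y0"
  shows "\<exists>Ob. open Ob \<and> (y0, l0) \<in> Ob \<and> Ob \<inter> {(y, r::real). g y \<le> ereal r} = {}"
proof -
  obtain \<mu> where \<mu>: "l0 < \<mu>" "ereal \<mu> < g y0" using ereal_dense2[OF below] by auto
  have "open (- {y. g y \<le> ereal \<mu>})" using lsc unfolding lsc_fun_def by blast
  then have "open ((- {y. g y \<le> ereal \<mu>}) \<times> {..<\<mu>})" by (intro open_Times) auto
  moreover have "((- {y. g y \<le> ereal \<mu>}) \<times> {..<\<mu>}) \<inter> {(y, r). g y \<le> ereal r} = {}"
  proof -
    have False if "\<not> g y \<le> ereal \<mu>" "r < \<mu>" "g y \<le> ereal r" for y r
      using that order_trans[of "g y" "ereal r" "ereal \<mu>"] by simp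
    then show ?thesis by auto
  qed
  ultimately show ?thesis using \<mu> by (intro exI[of _ "(- {y. g y \<le> ereal \<mu>}) \<times> {..<\<mu>}"]) auto
qed

text \<open>The case of a vertical hyperplane separating \<open>y0\<close> from the domain of \<open>g\<close>.\<close>
lemma affine_minorant_tilt:
  assumes a1: "affine_minorant g a1 c1" and b: "b \<in> dual"
    and b_le: "\<And>y. g y < \<infinity> \<Longrightarrow> b y \<le> m" and gap: "m < b y0"
  shows "\<exists>a c. affine_minorant g a c \<and> l0 < a y0 + c"
proof -
  define k where "k = max 0 ((l0 - a1 y0 - c1) / (b y0 - m) + 1)"
  have "k \<ge> 0" by (simp add: k_def)
  have "ereal (a1 y + k * b y + (c1 - k * m)) \<le> g y" for y
  proof (cases "g y < \<infinity>")
    case True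
    then have "k * b y \<le> k * m" using b_le \<open>k \<ge> 0\<close> by (simp add: mult_left_mono)
    then have "ereal (a1 y + k * b y + (c1 - k * m)) \<le> ereal (a1 y + c1)" by simp
    then show ?thesis using affine_minorant_le[OF a1] order_trans by blast
  qed simp
  moreover have "l0 < a1 y0 + k * b y0 + (c1 - k * m)"
  proof -
    have "((l0 - a1 y0 - c1) / (b y0 - m) + 1) * (b y0 - m) \<le> k * (b y0 - m)"
      using gap by (intro mult_right_mono) (auto simp: k_def)
    moreover have "((l0 - a1 y0 - c1) / (b y0 - m) + 1) * (b y0 - m) = l0 - a1 y0 - c1 + (b y0 - m)"
      using gap by (simp add: field_simps)
    ultimately show ?thesis using gap by (simp add: algebra_simps)
  qed
  moreover have "(\<lambda>y. a1 y + k * b y) \<in> dual"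
    using a1 b by (auto simp: affine_minorant_def intro!: dual_add dual_cmult)
  ultimately show ?thesis unfolding affine_minorant_def
    by (intro exI[of _ "\<lambda>y. a1 y + k * b y"] exI[of _ "c1 - k * m"]) (simp add: add.assoc)
qed

lemma proper_fun_finite_value:
  assumes "proper_fun g"
  obtains y v where "g y = ereal v"
  using assms unfolding proper_fun_def by (metis less_ereal.simps(2,4) real_of_ereal.elims)

context
  assumes lc: "locally_convex TYPE('x::{real_vector,topological_space})"
begin

lemma epigraph_separation:
  assumes cvx: "convex_fun (g :: 'x \<Rightarrow> ereal)" and lsc: "lsc_fun g" and below: "ereal l0 < g y0"
  shows "\<exists>b\<in>dual. \<exists>\<beta> m. (\<forall>y r. g y \<le> ereal r \<longrightarrow> b y + \<beta> * r \<le> m) \<and> m < b y0 + \<beta> * l0"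
proof -
  define E where "E = {(y, r::real). g y \<le> ereal r}"
  obtain Ob where Ob: "open Ob" "(y0, l0) \<in> Ob" "Ob \<inter> E = {}"
    using open_nhd_disjoint_epigraph[OF lsc below] unfolding E_def by blast
  obtain L :: "'x \<times> real \<Rightarrow> real" and m
    where L: "linear L" "continuous_on UNIV L" "\<And>e. e \<in> E \<Longrightarrow> L e \<le> m" "m < L (y0, l0)"
    using separation_open_convex[OF locally_convex_prod_real[OF lc] _ Ob] cvx
    unfolding convex_fun_def E_def by blast
  define b where "b y = L (y, 0)" for y
  have L_split: "L (y, r) = b y + L (0, 1) * r" for y r
  proof -
    have "L (y, r) = L ((y, 0) + r *\<^sub>R (0, 1))" by simp
    then show ?thesis unfolding b_def by (simp only: linear_add[OF L(1)] linear_scale[OF L(1)]) simp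
  qed
  have "linear b"
  proof (rule linearI)
    show "b (u + v) = b u + b v" for u v
      using linear_add[OF L(1), of "(u, 0)" "(v, 0)"] by (simp add: b_def)
    show "b (c *\<^sub>R u) = c *\<^sub>R b u" for c u
      using linear_scale[OF L(1), of c "(u, 0)"] by (simp add: b_def)
  qed
  moreover have "continuous_on UNIV (L \<circ> (\<lambda>y. (y, 0)))"
    by (rule continuous_on_compose) (auto intro!: continuous_intros continuous_on_subset[OF L(2)])
  ultimately have "b \<in> dual" by (simp add: dual_def b_def comp_def)
  moreover have "b y + L (0, 1) * r \<le> m" if "g y \<le> ereal r" for y r
    using L(3)[of "(y, r)"] that L_split[of y r] unfolding E_def by simp
  moreover have "m < b y0 + L (0, 1) * l0" using L(4) L_split[of y0 l0] by simp
  ultimately show ?thesis by blast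
qed

lemma affine_minorant_of_separation:
  assumes pr: "proper_fun (g :: 'x \<Rightarrow> ereal)" and b: "b \<in> dual" and neg: "\<beta> < 0"
    and sep: "\<forall>y r. g y \<le> ereal r \<longrightarrow> b y + \<beta> * r \<le> m" and above: "m < b y0 + \<beta> * l0"
  shows "affine_minorant g (\<lambda>y. (- 1 / \<beta>) * b y) (m / \<beta>) \<and> l0 < (- 1 / \<beta>) * b y0 + m / \<beta>"
proof -
  have eq: "(- 1 / \<beta>) * b y + m / \<beta> = (m - b y) / \<beta>" for y by (simp add: diff_divide_distrib)
  have "ereal ((- 1 / \<beta>) * b y + m / \<beta>) \<le> g y" for y
  proof (cases "g y")
    case (real v)
    then have "b y + \<beta> * v \<le> m" using sep by simp
    then show ?thesis using real neg by (simp add: eq neg_divide_le_eq algebra_simps)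
  qed (use pr in \<open>simp_all add: proper_fun_def\<close>)
  moreover have "l0 < (- 1 / \<beta>) * b y0 + m / \<beta>"
    using neg above by (simp add: eq neg_less_divide_eq algebra_simps)
  moreover have "(\<lambda>y. (- 1 / \<beta>) * b y) \<in> dual" by (rule dual_cmult[OF b])
  ultimately show ?thesis unfolding affine_minorant_def by blast
qed

lemma affine_minorant_exists:
  assumes pr: "proper_fun (g :: 'x \<Rightarrow> ereal)" and cvx: "convex_fun g" and lsc: "lsc_fun g"
  shows "\<exists>a c. affine_minorant g a c"
proof -
  obtain y1 v1 where v1: "g y1 = ereal v1" using proper_fun_finite_value[OF pr] .
  then have "ereal (v1 - 1) < g y1" by simp
  then obtain b \<beta> m where sep: "b \<in> dual" "\<forall>y r. g y \<le> ereal r \<longrightarrow> b y + \<beta> * r \<le> m"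
      "m < b y1 + \<beta> * (v1 - 1)"
    using epigraph_separation[OF cvx lsc] by blast
  moreover have "\<beta> < 0" using sep(2)[rule_format, of y1 v1] sep(3) v1 by (simp add: algebra_simps)
  ultimately show ?thesis using affine_minorant_of_separation[OF pr] by blast
qed

theorem affine_minorant_above:
  assumes pr: "proper_fun (g :: 'x \<Rightarrow> ereal)" and cvx: "convex_fun g" and lsc: "lsc_fun g"
    and below: "ereal l0 < g y0"
  shows "\<exists>a c. affine_minorant g a c \<and> l0 < a y0 + c"
proof -
  obtain b \<beta> m where sep: "b \<in> dual" "\<forall>y r. g y \<le> ereal r \<longrightarrow> b y + \<beta> * r \<le> m" "m < b y0 + \<beta> * l0"
    using epigraph_separation[OF cvx lsc below] by blast
  obtain y1 v1 where v1: "g y1 = ereal v1" using proper_fun_finite_value[OF pr] .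
  have "\<beta> \<le> 0"
  proof (rule ccontr)
    assume "\<not> \<beta> \<le> 0"
    define r where "r = max v1 ((m - b y1) / \<beta> + 1)"
    have "b y1 + \<beta> * r \<le> m" using sep(2) v1 by (simp add: r_def)
    moreover have "\<beta> * ((m - b y1) / \<beta> + 1) \<le> \<beta> * r"
      using \<open>\<not> \<beta> \<le> 0\<close> by (intro mult_left_mono) (auto simp: r_def)
    moreover have "\<beta> * ((m - b y1) / \<beta> + 1) = m - b y1 + \<beta>"
      using \<open>\<not> \<beta> \<le> 0\<close> by (simp add: field_simps)
    ultimately show False using \<open>\<not> \<beta> \<le> 0\<close> by linarith
  qed
  show ?thesis
  proof (cases "\<beta> < 0")
    case True
    then show ?thesis using affine_minorant_of_separation[OF pr sep(1) _ sep(2,3)] by blast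
  next
    case False
    have "b y \<le> m" if fin: "g y < \<infinity>" for y
    proof -
      obtain v where "g y = ereal v" using fin proper_funD[OF pr, of y] by (cases "g y") simp_all
      then show ?thesis using sep(2) False \<open>\<beta> \<le> 0\<close> by force
    qed
    moreover have "m < b y0" using sep(3) False \<open>\<beta> \<le> 0\<close> by simp
    moreover obtain a1 c1 where "affine_minorant g a1 c1" using affine_minorant_exists[OF pr cvx lsc] by blast
    ultimately show ?thesis using affine_minorant_tilt sep(1) by blast
  qed
qed

end

section \<open>\<open>\<epsilon>\<close>-subdifferentials\<close>

lemma ereal_cmult_le_iff: "\<rho> > 0 \<Longrightarrow> ereal \<rho> * e \<le> ereal r \<longleftrightarrow> e \<le> ereal (r / \<rho>)"
  by (cases e) (auto simp: pos_le_divide_eq mult.commute)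

context
  fixes \<rho> :: real and g :: "'x::{real_vector,topological_space} \<Rightarrow> ereal"
  assumes pos: "\<rho> > 0"
begin

lemma proper_fun_cmult: "proper_fun g \<Longrightarrow> proper_fun (\<lambda>y. ereal \<rho> * g y)"
  unfolding proper_fun_def
proof (elim conjE exE, intro conjI allI exI)
  fix y y0 assume "\<forall>y. g y \<noteq> - \<infinity>" "g y0 < \<infinity>"
  then show "ereal \<rho> * g y \<noteq> - \<infinity>" "ereal \<rho> * g y0 < \<infinity>"
    using pos by (cases "g y"; cases "g y0"; simp)+
qed

lemma convex_fun_cmult: "convex_fun g \<Longrightarrow> convex_fun (\<lambda>y. ereal \<rho> * g y)"
  unfolding convex_fun_def
proof (rule convexI)
  fix p q :: "'x \<times> real" and u v :: real
  assume cvx: "convex {(y, r). g y \<le> ereal r}"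
    and "p \<in> {(y, r). ereal \<rho> * g y \<le> ereal r}" "q \<in> {(y, r). ereal \<rho> * g y \<le> ereal r}"
    and uv: "0 \<le> u" "0 \<le> v" "u + v = 1"
  moreover obtain y1 r1 y2 r2 where pq: "p = (y1, r1)" "q = (y2, r2)" by (cases p, cases q)
  ultimately have "(y1, r1 / \<rho>) \<in> {(y, r). g y \<le> ereal r}" "(y2, r2 / \<rho>) \<in> {(y, r). g y \<le> ereal r}"
    using ereal_cmult_le_iff[OF pos] by auto
  from convexD[OF cvx this uv]
  have "g (u *\<^sub>R y1 + v *\<^sub>R y2) \<le> ereal ((u * r1 + v * r2) / \<rho>)" by (simp add: add_divide_distrib)
  then show "u *\<^sub>R p + v *\<^sub>R q \<in> {(y, r). ereal \<rho> * g y \<le> ereal r}"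
    using pq ereal_cmult_le_iff[OF pos] by simp
qed

lemma lsc_fun_cmult: "lsc_fun g \<Longrightarrow> lsc_fun (\<lambda>y. ereal \<rho> * g y)"
  unfolding lsc_fun_def
proof
  fix c :: ereal assume lsc: "\<forall>c. closed {y. g y \<le> c}"
  show "closed {y. ereal \<rho> * g y \<le> c}"
  proof (cases c)
    case (real c0)
    then have "{y. ereal \<rho> * g y \<le> c} = {y. g y \<le> ereal (c0 / \<rho>)}" using ereal_cmult_le_iff[OF pos] by simp
    then show ?thesis using lsc by simp
  next
    case MInf
    then have "{y. ereal \<rho> * g y \<le> c} = {y. g y \<le> - \<infinity>}" using pos by (auto simp: ereal_mult_le_0_iff)
    then show ?thesis using lsc by metis
  qed simp
qed

end

lemma convex_fun_le_interpolation:
  assumes cvx: "convex_fun g" and "g x \<le> ereal a" "g (x + t *\<^sub>R z) \<le> ereal b" "0 \<le> s" "s \<le> t" "0 < t"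
  shows "g (x + s *\<^sub>R z) \<le> ereal (a + s / t * (b - a))"
proof -
  have "(1 - s / t) *\<^sub>R (x, a) + (s / t) *\<^sub>R (x + t *\<^sub>R z, b) \<in> {(y, r). g y \<le> ereal r}"
    by (rule convexD[OF cvx[unfolded convex_fun_def]]) (use assms in auto)
  moreover have "(1 - s / t) *\<^sub>R x + (s / t) *\<^sub>R (x + t *\<^sub>R z) = x + s *\<^sub>R z"
    using \<open>0 < t\<close> by (simp add: algebra_simps)
  moreover have "(1 - s / t) * a + s / t * b = a + s / t * (b - a)"
    by (simp add: algebra_simps diff_divide_distrib)
  ultimately show ?thesis by simp
qed

lemma eps_subdiff_dual: "a \<in> eps_subdiff g \<epsilon> x \<Longrightarrow> a \<in> dual"
  unfolding eps_subdiff_def by (auto split: if_splits)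

lemma eps_subdiff_finite_iff:
  assumes "g x = ereal gx"
  shows "a \<in> eps_subdiff g \<epsilon> x \<longleftrightarrow> a \<in> dual \<and> (\<forall>y. ereal (gx + (a y - a x - \<epsilon>)) \<le> g y)"
  using assms unfolding eps_subdiff_def by simp

lemma eps_subdiff_le:
  assumes "a \<in> eps_subdiff g \<epsilon> x" "g x = ereal gx" "g y \<le> ereal w"
  shows "a y - a x \<le> w - gx + \<epsilon>"
proof -
  have "ereal (gx + (a y - a x - \<epsilon>)) \<le> g y"
    using assms(1,2) eps_subdiff_finite_iff by blast
  then show ?thesis using assms(3) order_trans[of _ "g y" "ereal w"] by fastforce
qed

lemma eps_subdiff_of_affine_minorant:
  assumes "affine_minorant g a c" "g x = ereal gx" "gx - \<epsilon> \<le> a x + c"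
  shows "a \<in> eps_subdiff g \<epsilon> x"
  unfolding eps_subdiff_finite_iff[where g = g and x = x and gx = gx, OF assms(2)]
proof (intro conjI allI)
  show "a \<in> dual" using assms(1) by (simp add: affine_minorant_def)
  show "ereal (gx + (a y - a x - \<epsilon>)) \<le> g y" for y
  proof -
    have "ereal (gx + (a y - a x - \<epsilon>)) \<le> ereal (a y + c)" using assms(3) by simp
    then show ?thesis using affine_minorant_le[OF assms(1), of y] by (rule order_trans)
  qed
qed

lemma affine_minorant_convex_combination:
  assumes pr: "proper_fun g" and "affine_minorant g a1 c1" "affine_minorant g a2 c2"
    and "0 \<le> u" "0 \<le> v" "u + v = 1"
  shows "affine_minorant g (\<lambda>y. u * a1 y + v * a2 y) (u * c1 + v * c2)"
  unfolding affine_minorant_def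
proof (intro conjI allI)
  show "(\<lambda>y. u * a1 y + v * a2 y) \<in> dual"
    using assms(2,3) by (auto simp: affine_minorant_def intro!: dual_add dual_cmult)
  fix y
  show "ereal (u * a1 y + v * a2 y + (u * c1 + v * c2)) \<le> g y"
  proof (cases "g y")
    case (real w)
    then have "a1 y + c1 \<le> w" "a2 y + c2 \<le> w"
      using affine_minorant_le[OF assms(2), of y] affine_minorant_le[OF assms(3), of y] by auto
    then have "u * (a1 y + c1) + v * (a2 y + c2) \<le> u * w + v * w"
      using assms(4,5) by (intro add_mono mult_left_mono) auto
    then show ?thesis using real assms(6) by (simp add: algebra_simps flip: distrib_right)
  qed (use pr in \<open>simp_all add: proper_fun_def\<close>)
qed

lemma separation_from_quadrant:
  fixes Q :: "(real \<times> real) set"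
  assumes "convex Q" "Q \<noteq> {}" "Q \<inter> ({r..} \<times> {0..}) = {}"
  shows "\<exists>\<alpha> \<beta>. 0 \<le> \<alpha> \<and> 0 \<le> \<beta> \<and> (\<alpha>, \<beta>) \<noteq> (0, 0) \<and> (\<forall>(u, v)\<in>Q. \<alpha> * u + \<beta> * v \<le> \<alpha> * r)"
proof -
  obtain w \<gamma> where w: "w \<noteq> 0" "\<And>q. q \<in> Q \<Longrightarrow> inner w q \<le> \<gamma>" "\<And>k. k \<in> {r..} \<times> {0..} \<Longrightarrow> \<gamma> \<le> inner w k"
    using separating_hyperplane_sets[OF assms(1) convex_Times assms(2) _ assms(3)] by fastforce
  obtain \<alpha> \<beta> where w_eq: "w = (\<alpha>, \<beta>)" by (cases w)
  have quadrant: "\<gamma> \<le> \<alpha> * u + \<beta> * v" if "r \<le> u" "0 \<le> v" for u v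
    using w(3)[of "(u, v)"] that w_eq by simp
  have \<gamma>: "\<gamma> \<le> \<alpha> * r" using quadrant[of r 0] by simp
  have "0 \<le> \<alpha>"
  proof (rule ccontr)
    assume "\<not> 0 \<le> \<alpha>"
    have "\<gamma> \<le> \<alpha> * (r + ((\<gamma> - \<alpha> * r) / \<alpha> + 1))"
      using quadrant[of "r + ((\<gamma> - \<alpha> * r) / \<alpha> + 1)" 0] \<gamma> \<open>\<not> 0 \<le> \<alpha>\<close> by (simp add: divide_nonpos_neg)
    moreover have "\<alpha> * (r + ((\<gamma> - \<alpha> * r) / \<alpha> + 1)) = \<gamma> + \<alpha>"
      using \<open>\<not> 0 \<le> \<alpha>\<close> by (simp add: field_simps)
    ultimately show False using \<open>\<not> 0 \<le> \<alpha>\<close> by linarith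
  qed
  moreover have "0 \<le> \<beta>"
  proof (rule ccontr)
    assume "\<not> 0 \<le> \<beta>"
    have "\<gamma> \<le> \<alpha> * r + \<beta> * ((\<gamma> - \<alpha> * r) / \<beta> + 1)"
      using quadrant[of r "(\<gamma> - \<alpha> * r) / \<beta> + 1"] \<gamma> \<open>\<not> 0 \<le> \<beta>\<close> by (simp add: divide_nonpos_neg)
    moreover have "\<alpha> * r + \<beta> * ((\<gamma> - \<alpha> * r) / \<beta> + 1) = \<gamma> + \<beta>"
      using \<open>\<not> 0 \<le> \<beta>\<close> by (simp add: field_simps)
    ultimately show False using \<open>\<not> 0 \<le> \<beta>\<close> by linarith
  qed
  moreover have "\<alpha> * u + \<beta> * v \<le> \<alpha> * r" if "(u, v) \<in> Q" for u v
    using w(2)[OF that] w_eq \<gamma> by simp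
  ultimately show ?thesis using w(1) w_eq by (intro exI[of _ \<alpha>] exI[of _ \<beta>]) (auto simp: zero_prod_def)
qed

lemma convex_affine_minorant_values:
  assumes pr: "proper_fun g"
  shows "convex {(a z, a x + c + k) | a c. affine_minorant g a c}"
proof (rule convexI)
  fix p q :: "real \<times> real" and u v :: real
  assume "p \<in> {(a z, a x + c + k) | a c. affine_minorant g a c}" "q \<in> {(a z, a x + c + k) | a c. affine_minorant g a c}"
    and uv: "0 \<le> u" "0 \<le> v" "u + v = 1"
  then obtain a1 c1 a2 c2 where p: "p = (a1 z, a1 x + c1 + k)" "affine_minorant g a1 c1"
    and q: "q = (a2 z, a2 x + c2 + k)" "affine_minorant g a2 c2" by blast
  have "affine_minorant g (\<lambda>y. u * a1 y + v * a2 y) (u * c1 + v * c2)"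
    by (rule affine_minorant_convex_combination[OF pr p(2) q(2) uv])
  moreover have "u *\<^sub>R p + v *\<^sub>R q = (u * a1 z + v * a2 z, (u * a1 x + v * a2 x) + (u * c1 + v * c2) + k)"
  proof -
    have "k * u + k * v = k" using uv(3) by (simp flip: distrib_left)
    then show ?thesis using p(1) q(1) by (simp add: algebra_simps)
  qed
  ultimately show "u *\<^sub>R p + v *\<^sub>R q \<in> {(a z, a x + c + k) | a c. affine_minorant g a c}"
    by (intro CollectI exI[of _ "\<lambda>y. u * a1 y + v * a2 y"] exI[of _ "u * c1 + v * c2"]) simp
qed

lemma eps_subdiff_zero_if_wstar_cco_approx:
  fixes g :: "'x::{real_vector,topological_space} \<Rightarrow> ereal"
  assumes gx: "g x = ereal c" and not_MInf: "\<And>y. g y \<noteq> - \<infinity>"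
    and S_dual: "\<And>\<epsilon>. \<epsilon> > 0 \<Longrightarrow> S \<epsilon> \<subseteq> dual"
    and mem: "\<And>\<epsilon>. \<epsilon> > 0 \<Longrightarrow> \<phi> \<in> wstar_cco (S \<epsilon>)"
    and approx: "\<And>y v. g y = ereal v \<Longrightarrow> \<exists>M. \<forall>\<epsilon>\<in>{0<..1}. \<forall>\<psi>\<in>S \<epsilon>. \<psi> y - \<psi> x \<le> v - c + \<epsilon> * M"
  shows "\<phi> \<in> eps_subdiff g 0 x"
proof -
  have \<phi>: "\<phi> \<in> dual"
    using mem[of 1] wstar_cco_least[OF S_dual[of 1] fconvex_dual wstar_closed_dual] by auto
  have "\<phi> y - \<phi> x \<le> v - c" if gy: "g y = ereal v" for y v
  proof -
    obtain M where M: "\<And>\<epsilon> \<psi>. \<epsilon> \<in> {0<..1} \<Longrightarrow> \<psi> \<in> S \<epsilon> \<Longrightarrow> \<psi> y - \<psi> x \<le> v - c + \<epsilon> * M"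
      using approx[OF gy] by blast
    have bound: "\<phi> y - \<phi> x \<le> v - c + \<epsilon> * M" if "\<epsilon> \<in> {0<..1}" for \<epsilon>
    proof -
      have increment: "\<psi> (y - x) = \<psi> y - \<psi> x" if "\<psi> \<in> dual" for \<psi>
        using dual_linear[OF that] by (rule linear_diff)
      have "S \<epsilon> \<subseteq> {\<psi> \<in> dual. \<psi> (y - x) \<le> v - c + \<epsilon> * M}"
      proof
        fix \<psi> assume \<psi>: "\<psi> \<in> S \<epsilon>"
        then have "\<psi> \<in> dual" using S_dual[of \<epsilon>] that by auto
        then show "\<psi> \<in> {\<psi> \<in> dual. \<psi> (y - x) \<le> v - c + \<epsilon> * M}"
          using M[OF that \<psi>] increment[of \<psi>] by simp
      qed
      then have "wstar_cco (S \<epsilon>) \<subseteq> {\<psi> \<in> dual. \<psi> (y - x) \<le> v - c + \<epsilon> * M}"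
        by (rule wstar_cco_subset_halfspace)
      then have "\<phi> \<in> {\<psi> \<in> dual. \<psi> (y - x) \<le> v - c + \<epsilon> * M}"
        using mem that by auto
      then show ?thesis using increment[OF \<phi>] by simp
    qed
    show ?thesis
    proof (rule field_le_epsilon)
      fix e :: real assume "e > 0"
      define \<epsilon> where "\<epsilon> = min 1 (e / (\<bar>M\<bar> + 1))"
      have \<epsilon>: "\<epsilon> \<in> {0<..1}" using \<open>e > 0\<close> by (simp add: \<epsilon>_def)
      have "\<epsilon> * M \<le> \<epsilon> * \<bar>M\<bar>" using \<epsilon> by (intro mult_left_mono) auto
      also have "\<dots> \<le> e / (\<bar>M\<bar> + 1) * \<bar>M\<bar>" by (intro mult_right_mono) (auto simp: \<epsilon>_def)
      also have "\<dots> \<le> e" using \<open>e > 0\<close> by (simp add: field_simps)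
      finally show "\<phi> y - \<phi> x \<le> v - c + e" using bound[OF \<epsilon>] by simp
    qed
  qed
  then have "ereal (c + (\<phi> y - \<phi> x - 0)) \<le> g y" for y
    using not_MInf[of y] by (cases "g y") force+
  then show ?thesis using \<phi> unfolding eps_subdiff_finite_iff[where g = g and x = x and gx = c, OF gx] by blast
qed

context
  assumes lc: "locally_convex TYPE('x::{real_vector,topological_space})"
begin

lemma eps_subdiff_nonempty:
  assumes "proper_fun (g :: 'x \<Rightarrow> ereal)" "convex_fun g" "lsc_fun g" "g x = ereal gx" "\<epsilon> > 0"
  shows "eps_subdiff g \<epsilon> x \<noteq> {}"
proof -
  have "ereal (gx - \<epsilon>) < g x" using assms(4,5) by simp
  then obtain a c where "affine_minorant g a c" "gx - \<epsilon> < a x + c"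
    using affine_minorant_above[OF lc assms(1-3)] by blast
  then have "a \<in> eps_subdiff g \<epsilon> x" by (intro eps_subdiff_of_affine_minorant) (use assms(4) in auto)
  then show ?thesis by blast
qed

lemma affine_minorant_above_ray:
  fixes g :: "'x \<Rightarrow> ereal"
  assumes pr: "proper_fun g" and cvx: "convex_fun g" and lsc: "lsc_fun g"
    and gx: "g x = ereal gx" and \<epsilon>: "\<epsilon> > 0" and "s \<ge> 0"
    and above: "s > 0 \<Longrightarrow> ereal (gx - \<epsilon> / 2 + s * r') \<le> g (x + s *\<^sub>R z)"
  shows "\<exists>a c. affine_minorant g a c \<and> s * r' + \<epsilon> / 4 < s * a z + (a x + c + (\<epsilon> - gx))"
proof -
  have "ereal (gx - \<epsilon> + s * r' + \<epsilon> / 4) < g (x + s *\<^sub>R z)"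
  proof (cases "s = 0")
    case False
    then have "ereal (gx - \<epsilon> / 2 + s * r') \<le> g (x + s *\<^sub>R z)" using above \<open>s \<ge> 0\<close> by simp
    moreover have "ereal (gx - \<epsilon> + s * r' + \<epsilon> / 4) < ereal (gx - \<epsilon> / 2 + s * r')" using \<epsilon> by simp
    ultimately show ?thesis by (rule order.strict_trans2[rotated])
  qed (use gx \<epsilon> in simp)
  then obtain a c where a: "affine_minorant g a c" "gx - \<epsilon> + s * r' + \<epsilon> / 4 < a (x + s *\<^sub>R z) + c"
    using affine_minorant_above[OF lc pr cvx lsc] by blast
  moreover have "linear a" using a(1) by (simp add: affine_minorant_def dual_def)
  then have "a (x + s *\<^sub>R z) = a x + s * a z" by (simp add: linear_add linear_scale)
  ultimately show ?thesis by (intro exI[of _ a] exI[of _ c]) auto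
qed

lemma affine_minorant_in_quadrant:
  fixes g :: "'x \<Rightarrow> ereal"
  assumes pr: "proper_fun g" and cvx: "convex_fun g" and lsc: "lsc_fun g"
    and gx: "g x = ereal gx" and \<epsilon>: "\<epsilon> > 0" and "r'' < r'"
    and above: "\<And>s. s > 0 \<Longrightarrow> ereal (gx - \<epsilon> / 2 + s * r') \<le> g (x + s *\<^sub>R z)"
  shows "\<exists>a c. affine_minorant g a c \<and> r'' \<le> a z \<and> 0 \<le> a x + c + (\<epsilon> - gx)"
proof (rule ccontr)
  assume none: "\<not> ?thesis"
  have minorant_above: "\<exists>a c. affine_minorant g a c \<and> s * r' + \<epsilon> / 4 < s * a z + (a x + c + (\<epsilon> - gx))"
    if "s \<ge> 0" for s
    using affine_minorant_above_ray[OF pr cvx lsc gx \<epsilon> that] above by blast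
  have at_x: "a x + c \<le> gx" if "affine_minorant g a c" for a c
    using affine_minorant_le[OF that, of x] gx by simp
  define Q where "Q = {(a z, a x + c + (\<epsilon> - gx)) | a c. affine_minorant g a c}"
  have "Q \<inter> ({r''..} \<times> {0..}) = {}" using none unfolding Q_def by fastforce
  moreover have "Q \<noteq> {}" using minorant_above[of 0] unfolding Q_def by auto
  moreover have "convex Q" unfolding Q_def by (rule convex_affine_minorant_values[OF pr])
  ultimately obtain \<alpha> \<beta> where \<alpha>\<beta>: "0 \<le> \<alpha>" "0 \<le> \<beta>" "(\<alpha>, \<beta>) \<noteq> (0, 0)"
    and sep: "\<forall>(u, v)\<in>Q. \<alpha> * u + \<beta> * v \<le> \<alpha> * r''"
    using separation_from_quadrant[of Q r''] by blast
  have minorant_sep: "\<alpha> * a z + \<beta> * (a x + c + (\<epsilon> - gx)) \<le> \<alpha> * r''" if "affine_minorant g a c" for a c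
  proof -
    have "(a z, a x + c + (\<epsilon> - gx)) \<in> Q" using that unfolding Q_def by blast
    then show ?thesis using sep by blast
  qed
  show False
  proof (cases "\<beta> = 0")
    case False
    then have "\<beta> > 0" using \<alpha>\<beta>(2) by simp
    obtain a c where a: "affine_minorant g a c" "(\<alpha> / \<beta>) * r' + \<epsilon> / 4 < (\<alpha> / \<beta>) * a z + (a x + c + (\<epsilon> - gx))"
      using minorant_above[of "\<alpha> / \<beta>"] \<alpha>\<beta>(1) \<open>\<beta> > 0\<close> by auto
    have "\<beta> * ((\<alpha> / \<beta>) * a z + (a x + c + (\<epsilon> - gx))) \<le> \<beta> * ((\<alpha> / \<beta>) * r'')"
      using minorant_sep[OF a(1)] \<open>\<beta> > 0\<close> by (simp add: algebra_simps)
    then have "(\<alpha> / \<beta>) * a z + (a x + c + (\<epsilon> - gx)) \<le> (\<alpha> / \<beta>) * r''"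
      using \<open>\<beta> > 0\<close> by (rule mult_left_le_imp_le)
    moreover have "(\<alpha> / \<beta>) * r'' \<le> (\<alpha> / \<beta>) * r'"
      using \<alpha>\<beta>(1) \<open>\<beta> > 0\<close> \<open>r'' < r'\<close> by (intro mult_left_mono) auto
    ultimately show False using a(2) \<epsilon> by simp
  next
    case True
    then have "\<alpha> > 0" using \<alpha>\<beta>(1,3) by simp
    define s where "s = \<epsilon> / (r' - r'')"
    have "s > 0" "s * (r' - r'') = \<epsilon>" using \<epsilon> \<open>r'' < r'\<close> by (simp_all add: s_def)
    obtain a c where a: "affine_minorant g a c" "s * r' + \<epsilon> / 4 < s * a z + (a x + c + (\<epsilon> - gx))"
      using minorant_above[of s] \<open>s > 0\<close> by auto
    have "a z \<le> r''" using minorant_sep[OF a(1)] True \<open>\<alpha> > 0\<close> by simp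
    then have "s * a z \<le> s * r''" using \<open>s > 0\<close> by (intro mult_left_mono) auto
    then show False using a(2) at_x[OF a(1)] \<open>s * (r' - r'') = \<epsilon>\<close> \<epsilon> by (simp add: algebra_simps)
  qed
qed

theorem eps_subdiff_bounded_imp_descent:
  fixes g :: "'x \<Rightarrow> ereal"
  assumes pr: "proper_fun g" and cvx: "convex_fun g" and lsc: "lsc_fun g"
    and gx: "g x = ereal gx" and \<epsilon>: "\<epsilon> > 0" and "r < r'"
    and bounded: "\<And>a. a \<in> eps_subdiff g \<epsilon> x \<Longrightarrow> a z \<le> r"
  shows "\<exists>s>0. g (x + s *\<^sub>R z) < ereal (gx - \<epsilon> / 2 + s * r')"
proof (rule ccontr)
  assume "\<not> ?thesis"
  then have "ereal (gx - \<epsilon> / 2 + s * r') \<le> g (x + s *\<^sub>R z)" if "s > 0" for s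
    using that not_less by blast
  moreover have "(r + r') / 2 < r'" using \<open>r < r'\<close> by simp
  ultimately obtain a c where "affine_minorant g a c" "(r + r') / 2 \<le> a z" "0 \<le> a x + c + (\<epsilon> - gx)"
    using affine_minorant_in_quadrant[OF pr cvx lsc gx \<epsilon>] by blast
  moreover from this have "a \<in> eps_subdiff g \<epsilon> x"
    by (intro eps_subdiff_of_affine_minorant) (use gx in auto)
  ultimately show False using bounded \<open>r < r'\<close> by fastforce
qed

lemma eps_subdiff_cmult_bounded_imp_finite:
  assumes pr: "proper_fun (g :: 'x \<Rightarrow> ereal)" and cvx: "convex_fun g" and lsc: "lsc_fun g"
    and gx: "g x = ereal gx" and \<epsilon>: "\<epsilon> > 0" and \<rho>: "\<rho> > 0"
    and bounded: "\<And>b. b \<in> eps_subdiff (\<lambda>y. ereal \<rho> * g y) \<epsilon> x \<Longrightarrow> b z \<le> K"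
  shows "\<exists>s>0. g (x + s *\<^sub>R z) < \<infinity>"
proof -
  have "ereal \<rho> * g x = ereal (\<rho> * gx)" using gx by simp
  then have "\<exists>s>0. ereal \<rho> * g (x + s *\<^sub>R z) < ereal (\<rho> * gx - \<epsilon> / 2 + s * (K + 1))"
    by (rule eps_subdiff_bounded_imp_descent[OF proper_fun_cmult[OF \<rho> pr] convex_fun_cmult[OF \<rho> cvx]
        lsc_fun_cmult[OF \<rho> lsc], where r = K]) (simp_all add: \<epsilon> bounded)
  then obtain s where "s > 0" "ereal \<rho> * g (x + s *\<^sub>R z) < ereal (\<rho> * gx - \<epsilon> / 2 + s * (K + 1))"
    by blast
  moreover have "g (x + s *\<^sub>R z) < \<infinity>"
    using calculation(2) \<rho> by (cases "g (x + s *\<^sub>R z)") auto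
  ultimately show ?thesis by blast
qed

end

section \<open>Suprema over a compact index set\<close>

lemma compact_uniform_step:
  assumes "compact T" "T \<noteq> {}"
    and local: "\<And>t. t \<in> T \<Longrightarrow>
      \<exists>U \<delta>. openin (top_of_set T) U \<and> t \<in> U \<and> (\<delta>::real) > 0 \<and> (\<forall>t'\<in>U. \<forall>s\<in>{0<..\<delta>}. P s t')"
  shows "\<exists>\<delta>>0. \<forall>t\<in>T. \<forall>s\<in>{0<..\<delta>}. P s t"
proof -
  define C where "C = {U. openin (top_of_set T) U \<and> (\<exists>\<delta>>0. \<forall>t'\<in>U. \<forall>s\<in>{0<..\<delta>}. P s t')}"
  have "T \<subseteq> \<Union>C"
  proof
    fix t assume "t \<in> T"
    then obtain U \<delta> where "openin (top_of_set T) U" "t \<in> U" "\<delta> > 0" "\<forall>t'\<in>U. \<forall>s\<in>{0<..\<delta>}. P s t'"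
      using local by blast
    then show "t \<in> \<Union>C" unfolding C_def by blast
  qed
  moreover have "\<forall>U\<in>C. openin (top_of_set T) U" unfolding C_def by blast
  ultimately obtain D where D: "D \<subseteq> C" "finite D" "T \<subseteq> \<Union>D"
    using \<open>compact T\<close> unfolding compact_eq_openin_cover by meson
  then have "\<forall>U\<in>D. \<exists>\<delta>>0. \<forall>t'\<in>U. \<forall>s\<in>{0<..\<delta>}. P s t'" unfolding C_def by blast
  then obtain \<delta> where \<delta>: "\<And>U. U \<in> D \<Longrightarrow> \<delta> U > 0 \<and> (\<forall>t'\<in>U. \<forall>s\<in>{0<..\<delta> U}. P s t')" by metis
  have "D \<noteq> {}" using D(3) \<open>T \<noteq> {}\<close> by blast
  then have "Min (\<delta> ` D) > 0" using D(2) \<delta> by (subst Min_gr_iff) auto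
  moreover have "P s t" if "t \<in> T" "s \<in> {0<..Min (\<delta> ` D)}" for s t
  proof -
    obtain U where "U \<in> D" "t \<in> U" using D(3) \<open>t \<in> T\<close> by blast
    moreover have "Min (\<delta> ` D) \<le> \<delta> U" using D(2) \<open>U \<in> D\<close> by simp
    ultimately show ?thesis using \<delta> that(2) by fastforce
  qed
  ultimately show ?thesis by blast
qed

lemma descent_step_size:
  fixes a b c t r :: real
  assumes "t > 0" "a \<le> c" "a < c \<or> b < a + t * r"
  shows "\<exists>\<sigma>>0. \<sigma> \<le> t \<and> (\<forall>s\<in>{0<..\<sigma>}. a + s / t * (b - a) < c + s * r)"
proof (cases "b < a + t * r")
  case True
  have "a + s / t * (b - a) < c + s * r" if "0 < s" for s
  proof -
    have "s / t * (b - a) < s / t * (t * r)" using True that \<open>t > 0\<close> by (intro mult_strict_left_mono) auto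
    then show ?thesis using \<open>a \<le> c\<close> \<open>t > 0\<close> by simp
  qed
  then show ?thesis using \<open>t > 0\<close> by (intro exI[of _ t]) auto
next
  case False
  then have "a < c" using assms(3) by simp
  define K where "K = \<bar>(b - a) / t - r\<bar>"
  define \<sigma> where "\<sigma> = min t ((c - a) / (K + 1))"
  have "\<sigma> > 0" using \<open>t > 0\<close> \<open>a < c\<close> by (simp add: \<sigma>_def K_def)
  moreover have "a + s / t * (b - a) < c + s * r" if "s \<in> {0<..\<sigma>}" for s
  proof -
    have "s / t * (b - a) - s * r = s * ((b - a) / t - r)" by (simp add: algebra_simps)
    also have "\<dots> \<le> s * K" using that by (intro mult_left_mono) (auto simp: K_def)
    also have "\<dots> \<le> (c - a) / (K + 1) * K"
      using that by (intro mult_right_mono) (auto simp: \<sigma>_def K_def)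
    also have "\<dots> < c - a"
      using \<open>a < c\<close> by (simp add: K_def field_simps)
    finally show ?thesis by simp
  qed
  ultimately show ?thesis by (intro exI[of _ \<sigma>]) (auto simp: \<sigma>_def)
qed

locale compact_convex_sup =
  fixes F :: "'t::t2_space \<Rightarrow> 'x::{real_vector,t2_space} \<Rightarrow> ereal"
    and T :: "'t set" and f :: "'x \<Rightarrow> ereal" and x :: 'x
  assumes lcs: "lcs_space TYPE('x)"
    and T_ne: "T \<noteq> {}"
    and Ft: "\<And>t. t \<in> T \<Longrightarrow> proper_fun (F t) \<and> convex_fun (F t) \<and> lsc_fun (F t)"
    and f_def: "f = (\<lambda>y. SUP t\<in>T. F t y)"
    and T_compact: "compact T"
    and usc: "\<And>z c. openin (top_of_set T) {t \<in> T. F t z < c}"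
    and x_dom: "f x < \<infinity>"
begin

abbreviation active :: "'t set" where
  "active \<equiv> {t \<in> T. F t x = f x}"

abbreviation fx :: real where
  "fx \<equiv> real_of_ereal (f x)"

lemma lc: "locally_convex TYPE('x)"
  using lcs_space_imp_locally_convex[OF lcs] .

lemma F_proper: "t \<in> T \<Longrightarrow> proper_fun (F t)"
  and F_convex: "t \<in> T \<Longrightarrow> convex_fun (F t)"
  and F_lsc: "t \<in> T \<Longrightarrow> lsc_fun (F t)"
  using Ft by blast+

lemma F_le_f: "t \<in> T \<Longrightarrow> F t y \<le> f y"
  unfolding f_def by (rule SUP_upper)

lemma f_le: "(\<And>t. t \<in> T \<Longrightarrow> F t y \<le> B) \<Longrightarrow> f y \<le> B"
  unfolding f_def by (rule SUP_least)

lemma f_not_MInf: "f y \<noteq> - \<infinity>"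
proof -
  obtain t where "t \<in> T" using T_ne by blast
  then show ?thesis using F_le_f[of t y] proper_funD[OF F_proper] by (metis MInfty_eq_minfinity ereal_infty_less_eq(2))
qed

lemma f_x: "f x = ereal fx"
  using x_dom f_not_MInf[of x] by (cases "f x") auto

lemma F_x: "t \<in> T \<Longrightarrow> F t x = ereal (real_of_ereal (F t x))"
  using F_le_f[of t x] x_dom proper_funD[OF F_proper, of t x] by (cases "F t x") auto

lemma F_x_le: "t \<in> T \<Longrightarrow> real_of_ereal (F t x) \<le> fx"
  using F_le_f[of t x] F_x[of t] f_x by (metis ereal_less_eq(3))

lemma F_x_less: "t \<in> T - active \<Longrightarrow> real_of_ereal (F t x) < fx"
  using F_x_le[of t] F_x[of t] f_x by force

lemma active_nonempty: "active \<noteq> {}"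
proof
  assume none: "active = {}"
  \<comment> \<open>then upper semicontinuity and compactness give a uniform gap between all \<open>F t x\<close> and \<open>f x\<close>\<close>
  have "\<exists>U \<delta>. openin (top_of_set T) U \<and> t \<in> U \<and> \<delta> > 0 \<and> (\<forall>t'\<in>U. \<forall>s\<in>{0<..\<delta>}. F t' x < ereal (fx - s))"
    if t: "t \<in> T" for t
  proof -
    define \<delta> where "\<delta> = (fx - real_of_ereal (F t x)) / 2"
    have "\<delta> > 0" using F_x_less[of t] t none by (simp add: \<delta>_def)
    have "F t x < ereal (fx - \<delta>)"
      by (subst F_x[OF t]) (use F_x_less[of t] t none in \<open>simp add: \<delta>_def field_simps\<close>)
    then have "t \<in> {t' \<in> T. F t' x < ereal (fx - \<delta>)}" using t by simp
    moreover have "F t' x < ereal (fx - s)" if "F t' x < ereal (fx - \<delta>)" "s \<in> {0<..\<delta>}" for t' s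
      using that by (metis diff_left_mono ereal_less_eq(3) greaterThanAtMost_iff order.strict_trans2)
    ultimately show ?thesis using usc \<open>\<delta> > 0\<close> by blast
  qed
  then obtain \<delta> where "\<delta> > 0" "\<forall>t\<in>T. \<forall>s\<in>{0<..\<delta>}. F t x < ereal (fx - s)"
    using compact_uniform_step[OF T_compact T_ne, of "\<lambda>s t. F t x < ereal (fx - s)"] by blast
  then have "f x \<le> ereal (fx - \<delta>)" by (intro f_le) (auto intro: less_imp_le)
  then have "ereal fx \<le> ereal (fx - \<delta>)" by (subst (asm) f_x)
  then show False using \<open>\<delta> > 0\<close> by simp
qed

lemma descent_on_neighbourhood:
  assumes U: "openin (top_of_set T) U" "t \<in> U" "\<And>t'. t' \<in> U \<Longrightarrow> F t' x \<le> ereal a"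
    and "a \<le> fx" "st > 0" "F t (x + st *\<^sub>R z) < ereal b" "a < fx \<or> b < a + st * r"
  shows "\<exists>U \<sigma>. openin (top_of_set T) U \<and> t \<in> U \<and> \<sigma> > 0 \<and>
    (\<forall>t'\<in>U. \<forall>s\<in>{0<..\<sigma>}. F t' (x + s *\<^sub>R z) < ereal (fx + s * r))"
proof -
  obtain \<sigma> where \<sigma>: "\<sigma> > 0" "\<sigma> \<le> st" "\<And>s. s \<in> {0<..\<sigma>} \<Longrightarrow> a + s / st * (b - a) < fx + s * r"
    using descent_step_size[OF \<open>st > 0\<close> \<open>a \<le> fx\<close>] assms(7) by blast
  define U' where "U' = U \<inter> {t' \<in> T. F t' (x + st *\<^sub>R z) < ereal b}"
  have "openin (top_of_set T) U'" unfolding U'_def using U(1) usc by (rule openin_Int)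
  moreover have "t \<in> U'" using U(1,2) assms(6) openin_imp_subset by (force simp: U'_def)
  moreover have "F t' (x + s *\<^sub>R z) < ereal (fx + s * r)" if "t' \<in> U'" "s \<in> {0<..\<sigma>}" for t' s
  proof -
    have "t' \<in> T" "t' \<in> U" "F t' (x + st *\<^sub>R z) \<le> ereal b" using that(1) by (auto simp: U'_def)
    then have "F t' (x + s *\<^sub>R z) \<le> ereal (a + s / st * (b - a))"
      using that(2) \<sigma>(2) \<open>st > 0\<close> by (intro convex_fun_le_interpolation[OF F_convex U(3)]) auto
    also have "\<dots> < ereal (fx + s * r)" using \<sigma>(3)[OF that(2)] by simp
    finally show ?thesis .
  qed
  ultimately show ?thesis using \<sigma>(1) by blast
qed

lemma local_descent:
  assumes \<epsilon>: "\<epsilon> > 0" and "r < r'" and t: "t \<in> T"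
    and active_bound: "\<And>t a. t \<in> active \<Longrightarrow> a \<in> eps_subdiff (F t) \<epsilon> x \<Longrightarrow> a z \<le> r"
    and inactive_finite: "\<And>t. t \<in> T - active \<Longrightarrow> \<exists>s>0. F t (x + s *\<^sub>R z) < \<infinity>"
  shows "\<exists>U \<sigma>. openin (top_of_set T) U \<and> t \<in> U \<and> \<sigma> > 0 \<and>
    (\<forall>t'\<in>U. \<forall>s\<in>{0<..\<sigma>}. F t' (x + s *\<^sub>R z) < ereal (fx + s * r'))"
proof (cases "t \<in> active")
  case True
  then have "F t x = ereal fx" using f_x by simp
  then obtain st where "st > 0" "F t (x + st *\<^sub>R z) < ereal (fx - \<epsilon> / 2 + st * r')"
    using eps_subdiff_bounded_imp_descent[OF lc F_proper[OF t] F_convex[OF t] F_lsc[OF t] _ \<epsilon> \<open>r < r'\<close>]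
      active_bound[OF True] by blast
  moreover have "F t' x \<le> ereal fx" if "t' \<in> T" for t' using F_le_f[OF that] f_x by metis
  ultimately show ?thesis
    using \<epsilon> t by (intro descent_on_neighbourhood[where a = fx]) auto
next
  case False
  obtain st where st: "st > 0" "F t (x + st *\<^sub>R z) < \<infinity>" using inactive_finite False t by blast
  obtain b where b: "F t (x + st *\<^sub>R z) < ereal b" using ereal_dense2[OF st(2)] by blast
  define a where "a = (real_of_ereal (F t x) + fx) / 2"
  have a: "real_of_ereal (F t x) < a" "a < fx" using F_x_less[of t] False t by (auto simp: a_def)
  have "F t x < ereal a" by (subst F_x[OF t]) (use a in simp)
  then show ?thesis
    using t a(2) by (intro descent_on_neighbourhood[where a = a, OF usc[of x "ereal a"] _ _ _ st(1) b]) auto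
qed

lemma subgradient_le_in_direction:
  assumes \<epsilon>: "\<epsilon> > 0" and \<phi>: "\<phi> \<in> eps_subdiff f 0 x"
    and active_bound: "\<And>t a. t \<in> active \<Longrightarrow> a \<in> eps_subdiff (F t) \<epsilon> x \<Longrightarrow> a z \<le> r"
    and inactive_finite: "\<And>t. t \<in> T - active \<Longrightarrow> \<exists>s>0. F t (x + s *\<^sub>R z) < \<infinity>"
  shows "\<phi> z \<le> r"
proof (rule ccontr)
  assume "\<not> \<phi> z \<le> r"
  define r' where "r' = (r + \<phi> z) / 2"
  have "r < r'" "r' < \<phi> z" using \<open>\<not> \<phi> z \<le> r\<close> by (auto simp: r'_def)
  have "\<exists>U \<sigma>. openin (top_of_set T) U \<and> t \<in> U \<and> \<sigma> > 0 \<and>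
      (\<forall>t'\<in>U. \<forall>s\<in>{0<..\<sigma>}. F t' (x + s *\<^sub>R z) < ereal (fx + s * r'))" if "t \<in> T" for t
    by (rule local_descent[OF \<epsilon> \<open>r < r'\<close> that]) (use active_bound inactive_finite in blast)+
  then obtain \<sigma> where "\<sigma> > 0" and "\<forall>t\<in>T. \<forall>s\<in>{0<..\<sigma>}. F t (x + s *\<^sub>R z) < ereal (fx + s * r')"
    using compact_uniform_step[OF T_compact T_ne, of "\<lambda>s t. F t (x + s *\<^sub>R z) < ereal (fx + s * r')"]
    by blast
  then have \<sigma>: "\<forall>t\<in>T. F t (x + \<sigma> *\<^sub>R z) < ereal (fx + \<sigma> * r')" by simp
  have "ereal (fx + \<sigma> * \<phi> z) \<le> f (x + \<sigma> *\<^sub>R z)"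
  proof -
    have "linear \<phi>" using eps_subdiff_dual[OF \<phi>] dual_linear by blast
    then show ?thesis
      using \<phi> unfolding eps_subdiff_finite_iff[where g = f and x = x and gx = fx, OF f_x]
      by (auto simp: linear_add linear_scale dest: spec[of _ "x + \<sigma> *\<^sub>R z"])
  qed
  also have "\<dots> \<le> ereal (fx + \<sigma> * r')" using \<sigma> by (intro f_le) (simp add: less_imp_le)
  finally have "\<phi> z \<le> r'" using \<open>\<sigma> > 0\<close> by simp
  then show False using \<open>r' < \<phi> z\<close> by simp
qed

abbreviation active_eps_subdiffs :: "real \<Rightarrow> ('x \<Rightarrow> real) set" where
  "active_eps_subdiffs \<epsilon> \<equiv> \<Union>t\<in>active. eps_subdiff (F t) \<epsilon> x"

abbreviation scaled_eps_subdiffs :: "real set \<Rightarrow> (real \<Rightarrow> 't \<Rightarrow> real) \<Rightarrow> real \<Rightarrow> ('x \<Rightarrow> real) set" where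
  "scaled_eps_subdiffs \<Lambda> \<rho> \<epsilon> \<equiv>
     \<Union>t\<in>T - active. smul_set \<Lambda> (eps_subdiff (\<lambda>y. ereal (\<rho> \<epsilon> t) * F t y) \<epsilon> x)"

definition admissible_scaling :: "(real \<Rightarrow> 't \<Rightarrow> real) \<Rightarrow> bool" where
  "admissible_scaling \<rho> \<longleftrightarrow> (\<forall>\<epsilon> t. \<epsilon> > 0 \<longrightarrow> t \<in> T - active \<longrightarrow>
     0 < \<rho> \<epsilon> t \<and> \<rho> \<epsilon> t \<le> 1 \<and> \<rho> \<epsilon> t * (fx - real_of_ereal (F t x)) \<le> \<epsilon> / 2)"

lemma active_eps_subdiffs_nonempty:
  assumes "\<epsilon> > 0"
  shows "active_eps_subdiffs \<epsilon> \<noteq> {}"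
proof -
  obtain t where t: "t \<in> T" "F t x = f x" using active_nonempty by blast
  then have "F t x = ereal fx" using f_x by metis
  then have "eps_subdiff (F t) \<epsilon> x \<noteq> {}"
    using eps_subdiff_nonempty[OF lc F_proper[OF t(1)] F_convex[OF t(1)] F_lsc[OF t(1)] _ assms] by blast
  then show ?thesis using t by blast
qed

lemma scaled_eps_subdiff_nonempty:
  assumes "t \<in> T" "\<rho> > 0" "\<epsilon> > 0"
  shows "eps_subdiff (\<lambda>y. ereal \<rho> * F t y) \<epsilon> x \<noteq> {}"
proof -
  have "ereal \<rho> * F t x = ereal (\<rho> * real_of_ereal (F t x))" by (subst F_x[OF assms(1)]) simp
  then show ?thesis
    using eps_subdiff_nonempty[OF lc proper_fun_cmult convex_fun_cmult lsc_fun_cmult]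
      F_proper F_convex F_lsc assms by blast
qed

lemma subdiff_subset_wstar_cco:
  assumes \<epsilon>: "\<epsilon> > 0" and \<phi>: "\<phi> \<in> eps_subdiff f 0 x" and S: "S \<subseteq> dual"
    and \<rho>: "\<And>t. t \<in> T - active \<Longrightarrow> \<rho> t > 0"
    and transfer: "\<And>z r. \<forall>\<psi>\<in>S. \<psi> z \<le> r \<Longrightarrow>
      (\<forall>t\<in>active. \<forall>a\<in>eps_subdiff (F t) \<epsilon> x. a z \<le> r) \<and>
      (\<forall>t\<in>T - active. \<exists>K. \<forall>b\<in>eps_subdiff (\<lambda>y. ereal (\<rho> t) * F t y) \<epsilon> x. b z \<le> K)"
  shows "\<phi> \<in> wstar_cco S"
proof (rule ccontr)
  assume "\<phi> \<notin> wstar_cco S"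
  then obtain z r where sep: "\<forall>\<psi>\<in>S. \<psi> z \<le> r" "r < \<phi> z"
    using wstar_separation[OF S eps_subdiff_dual[OF \<phi>]] by blast
  have "\<phi> z \<le> r"
  proof (rule subgradient_le_in_direction[OF \<epsilon> \<phi>])
    show "a z \<le> r" if "t \<in> active" "a \<in> eps_subdiff (F t) \<epsilon> x" for t a
      using transfer[OF sep(1)] that by blast
    show "\<exists>s>0. F t (x + s *\<^sub>R z) < \<infinity>" if t: "t \<in> T - active" for t
    proof -
      obtain K where "\<forall>b\<in>eps_subdiff (\<lambda>y. ereal (\<rho> t) * F t y) \<epsilon> x. b z \<le> K"
        using transfer[OF sep(1)] t by blast
      then show ?thesis
        using eps_subdiff_cmult_bounded_imp_finite[OF lc F_proper F_convex F_lsc F_x \<epsilon> \<rho>[OF t]] t by blast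
    qed
  qed
  then show False using sep(2) by simp
qed

lemma active_eps_subdiffs_dual: "active_eps_subdiffs \<epsilon> \<subseteq> dual"
  by (intro UN_least subsetI eps_subdiff_dual)

lemma scaled_eps_subdiffs_dual: "scaled_eps_subdiffs \<Lambda> \<rho> \<epsilon> \<subseteq> dual"
  by (intro UN_least smul_set_subset_dual subsetI eps_subdiff_dual)

lemma msum_eps_subdiffs_dual:
  "msum (active_eps_subdiffs \<epsilon>) (if active = T then {\<lambda>_. 0} else scaled_eps_subdiffs \<Lambda> \<rho> \<epsilon>) \<subseteq> dual"
  using scaled_eps_subdiffs_dual by (intro msum_subset_dual active_eps_subdiffs_dual) (simp add: dual_zero)

lemma subdiff_subset_wstar_cco_msum:
  assumes \<epsilon>: "\<epsilon> > 0" and \<phi>: "\<phi> \<in> eps_subdiff f 0 x" and \<rho>: "\<And>t. t \<in> T - active \<Longrightarrow> \<rho> \<epsilon> t > 0"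
  shows "\<phi> \<in> wstar_cco (msum (active_eps_subdiffs \<epsilon>)
    (if active = T then {\<lambda>_. 0} else scaled_eps_subdiffs {0, \<epsilon>} \<rho> \<epsilon>))"
    (is "_ \<in> wstar_cco (msum ?A ?B)")
proof (rule subdiff_subset_wstar_cco[OF \<epsilon> \<phi> _ \<rho>])
  show "msum ?A ?B \<subseteq> dual" by (rule msum_eps_subdiffs_dual)
  have zero: "(\<lambda>_. 0) \<in> ?B"
  proof (cases "active = T")
    case False
    then obtain t where t: "t \<in> T - active" by blast
    then obtain b where "b \<in> eps_subdiff (\<lambda>y. ereal (\<rho> \<epsilon> t) * F t y) \<epsilon> x"
      using scaled_eps_subdiff_nonempty \<rho> \<epsilon> by blast
    then have "(\<lambda>y. 0 * b y) \<in> scaled_eps_subdiffs {0, \<epsilon>} \<rho> \<epsilon>" using t by (blast intro: smul_setI)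
    then show ?thesis using False by simp
  qed simp
  obtain a0 where a0: "a0 \<in> ?A" using active_eps_subdiffs_nonempty[OF \<epsilon>] by blast
  fix z r assume bound: "\<forall>\<psi>\<in>msum ?A ?B. \<psi> z \<le> r"
  have "a z \<le> r" if "a \<in> ?A" for a
    using bound msumI[OF that zero] by fastforce
  moreover have "b z \<le> (r - a0 z) / \<epsilon>"
    if "t \<in> T - active" "b \<in> eps_subdiff (\<lambda>y. ereal (\<rho> \<epsilon> t) * F t y) \<epsilon> x" for t b
  proof -
    have "(\<lambda>y. \<epsilon> * b y) \<in> ?B" using that by (auto intro: smul_setI)
    then have "a0 z + \<epsilon> * b z \<le> r" using bound msumI[OF a0] by fastforce
    then show ?thesis using \<epsilon> by (simp add: le_divide_eq mult.commute)
  qed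
  ultimately show "(\<forall>t\<in>active. \<forall>a\<in>eps_subdiff (F t) \<epsilon> x. a z \<le> r) \<and>
      (\<forall>t\<in>T - active. \<exists>K. \<forall>b\<in>eps_subdiff (\<lambda>y. ereal (\<rho> \<epsilon> t) * F t y) \<epsilon> x. b z \<le> K)"
    by (intro conjI ballI exI) auto
qed

lemma subdiff_subset_wstar_cco_union:
  assumes \<epsilon>: "\<epsilon> > 0" and \<phi>: "\<phi> \<in> eps_subdiff f 0 x" and \<rho>: "\<And>t. t \<in> T - active \<Longrightarrow> \<rho> \<epsilon> t > 0"
  shows "\<phi> \<in> wstar_cco (active_eps_subdiffs \<epsilon> \<union> scaled_eps_subdiffs {\<epsilon>} \<rho> \<epsilon>)"
    (is "_ \<in> wstar_cco (?A \<union> ?B)")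
proof (rule subdiff_subset_wstar_cco[OF \<epsilon> \<phi> _ \<rho>])
  show "?A \<union> ?B \<subseteq> dual" using active_eps_subdiffs_dual scaled_eps_subdiffs_dual by blast
  fix z r assume bound: "\<forall>\<psi>\<in>?A \<union> ?B. \<psi> z \<le> r"
  have "b z \<le> r / \<epsilon>" if "t \<in> T - active" "b \<in> eps_subdiff (\<lambda>y. ereal (\<rho> \<epsilon> t) * F t y) \<epsilon> x" for t b
  proof -
    have "(\<lambda>y. \<epsilon> * b y) \<in> ?B" using that by (auto intro: smul_setI)
    then have "\<epsilon> * b z \<le> r" using bound by fastforce
    then show ?thesis using \<epsilon> by (simp add: le_divide_eq mult.commute)
  qed
  then show "(\<forall>t\<in>active. \<forall>a\<in>eps_subdiff (F t) \<epsilon> x. a z \<le> r) \<and>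
      (\<forall>t\<in>T - active. \<exists>K. \<forall>b\<in>eps_subdiff (\<lambda>y. ereal (\<rho> \<epsilon> t) * F t y) \<epsilon> x. b z \<le> K)"
    using bound by (intro conjI ballI exI) auto
qed

lemma active_eps_subgradient_increment:
  assumes "t \<in> active" "a \<in> eps_subdiff (F t) \<epsilon> x" "f y = ereal v"
  shows "a y - a x \<le> v - fx + \<epsilon>"
proof -
  have "F t x = ereal fx" using assms(1) f_x by (simp only: mem_Collect_eq)
  moreover have "F t y \<le> ereal v" using F_le_f[of t y] assms(1,3) by simp
  ultimately show ?thesis using eps_subdiff_le[OF assms(2)] by blast
qed

lemma scaled_eps_subgradient_increment:
  assumes "t \<in> T" "\<rho> > 0" "\<rho> * (fx - real_of_ereal (F t x)) \<le> \<epsilon> / 2"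
    and "b \<in> eps_subdiff (\<lambda>y. ereal \<rho> * F t y) \<epsilon> x" "f y = ereal v"
  shows "b y - b x \<le> \<rho> * (v - fx) + 3 / 2 * \<epsilon>"
proof -
  have "ereal \<rho> * F t x = ereal (\<rho> * real_of_ereal (F t x))" by (subst F_x[OF assms(1)]) simp
  moreover have "ereal \<rho> * F t y \<le> ereal (\<rho> * v)"
    using F_le_f[OF assms(1), of y] assms(2,5) ereal_mult_left_mono[of "F t y" "ereal v" "ereal \<rho>"] by simp
  ultimately have "b y - b x \<le> \<rho> * v - \<rho> * real_of_ereal (F t x) + \<epsilon>"
    using eps_subdiff_le[OF assms(4)] by blast
  then show ?thesis using assms(3) by (simp add: algebra_simps)
qed

lemma wstar_cco_msum_subset_subdiff:
  assumes \<rho>: "admissible_scaling \<rho>"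
    and mem: "\<And>\<epsilon>. \<epsilon> > 0 \<Longrightarrow> \<phi> \<in> wstar_cco (msum (active_eps_subdiffs \<epsilon>)
      (if active = T then {\<lambda>_. 0} else scaled_eps_subdiffs {0, \<epsilon>} \<rho> \<epsilon>))"
  shows "\<phi> \<in> eps_subdiff f 0 x"
proof (rule eps_subdiff_zero_if_wstar_cco_approx[where g = f and x = x and c = fx, OF f_x f_not_MInf _ mem])
  show "msum (active_eps_subdiffs \<epsilon>) (if active = T then {\<lambda>_. 0} else scaled_eps_subdiffs {0, \<epsilon>} \<rho> \<epsilon>) \<subseteq> dual"
    for \<epsilon> by (rule msum_eps_subdiffs_dual)
  fix y v assume fy: "f y = ereal v"
  have "\<psi> y - \<psi> x \<le> v - fx + \<epsilon> * (\<bar>v - fx\<bar> + 3)"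
    if \<epsilon>: "\<epsilon> \<in> {0<..1}"
    and \<psi>: "\<psi> \<in> msum (active_eps_subdiffs \<epsilon>) (if active = T then {\<lambda>_. 0} else scaled_eps_subdiffs {0, \<epsilon>} \<rho> \<epsilon>)"
    for \<epsilon> \<psi>
  proof -
    obtain a b where ab: "\<psi> = (\<lambda>y. a y + b y)" "a \<in> active_eps_subdiffs \<epsilon>"
      "b \<in> (if active = T then {\<lambda>_. 0} else scaled_eps_subdiffs {0, \<epsilon>} \<rho> \<epsilon>)"
      using \<psi> unfolding msum_def by blast
    have "a y - a x \<le> v - fx + \<epsilon>" using ab(2) active_eps_subgradient_increment[OF _ _ fy] by blast
    moreover have "b y - b x \<le> \<epsilon> * (\<bar>v - fx\<bar> + 2)"
    proof (cases "active = T")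
      case False
      then obtain t l b' where t: "t \<in> T - active" "l \<in> {0, \<epsilon>}" "b = (\<lambda>y. l * b' y)"
        "b' \<in> eps_subdiff (\<lambda>y. ereal (\<rho> \<epsilon> t) * F t y) \<epsilon> x"
        using ab(3) unfolding smul_set_def by auto
      have \<rho>t: "0 < \<rho> \<epsilon> t" "\<rho> \<epsilon> t \<le> 1" "\<rho> \<epsilon> t * (fx - real_of_ereal (F t x)) \<le> \<epsilon> / 2"
        using \<rho> \<epsilon> t(1) by (auto simp: admissible_scaling_def)
      have "b' y - b' x \<le> \<rho> \<epsilon> t * (v - fx) + 3 / 2 * \<epsilon>"
        using scaled_eps_subgradient_increment[OF _ \<rho>t(1,3) t(4) fy] t(1) by blast
      also have "\<dots> \<le> \<bar>v - fx\<bar> + 2"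
      proof -
        have "\<rho> \<epsilon> t * (v - fx) \<le> \<rho> \<epsilon> t * \<bar>v - fx\<bar>" using \<rho>t(1) by (intro mult_left_mono) auto
        also have "\<dots> \<le> \<bar>v - fx\<bar>" using \<rho>t(1,2) by (intro mult_left_le_one_le) auto
        finally show ?thesis using \<epsilon> by simp
      qed
      finally show ?thesis using t(2,3) \<epsilon> by (auto simp: right_diff_distrib[symmetric] intro: mult_left_mono)
    qed (use ab(3) \<epsilon> in auto)
    ultimately show ?thesis using ab(1) \<epsilon> by (simp add: algebra_simps)
  qed
  then show "\<exists>M. \<forall>\<epsilon>\<in>{0<..1}. \<forall>\<psi>\<in>msum (active_eps_subdiffs \<epsilon>)
      (if active = T then {\<lambda>_. 0} else scaled_eps_subdiffs {0, \<epsilon>} \<rho> \<epsilon>). \<psi> y - \<psi> x \<le> v - fx + \<epsilon> * M"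
    by blast
qed

lemma wstar_cco_union_subset_subdiff:
  assumes \<rho>: "admissible_scaling \<rho>"
    and min: "\<forall>y. f x \<le> f y"
    and mem: "\<And>\<epsilon>. \<epsilon> > 0 \<Longrightarrow> \<phi> \<in> wstar_cco (active_eps_subdiffs \<epsilon> \<union> scaled_eps_subdiffs {\<epsilon>} \<rho> \<epsilon>)"
  shows "\<phi> \<in> eps_subdiff f 0 x"
proof (rule eps_subdiff_zero_if_wstar_cco_approx[where g = f and x = x and c = fx, OF f_x f_not_MInf _ mem])
  show "active_eps_subdiffs \<epsilon> \<union> scaled_eps_subdiffs {\<epsilon>} \<rho> \<epsilon> \<subseteq> dual" for \<epsilon>
    using active_eps_subdiffs_dual scaled_eps_subdiffs_dual by blast
  fix y v assume fy: "f y = ereal v"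
  have "fx \<le> v" using min fy f_x by (metis ereal_less_eq(3))
  have "\<psi> y - \<psi> x \<le> v - fx + \<epsilon> * 3"
    if \<epsilon>: "\<epsilon> \<in> {0<..1}" and \<psi>: "\<psi> \<in> active_eps_subdiffs \<epsilon> \<union> scaled_eps_subdiffs {\<epsilon>} \<rho> \<epsilon>" for \<epsilon> \<psi>
    using \<psi>
  proof
    assume "\<psi> \<in> active_eps_subdiffs \<epsilon>"
    then show ?thesis using active_eps_subgradient_increment[OF _ _ fy] \<epsilon> by fastforce
  next
    assume "\<psi> \<in> scaled_eps_subdiffs {\<epsilon>} \<rho> \<epsilon>"
    then obtain t b where t: "t \<in> T - active" "\<psi> = (\<lambda>y. \<epsilon> * b y)"
      "b \<in> eps_subdiff (\<lambda>y. ereal (\<rho> \<epsilon> t) * F t y) \<epsilon> x"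
      unfolding smul_set_def by auto
    have \<rho>t: "0 < \<rho> \<epsilon> t" "\<rho> \<epsilon> t \<le> 1" "\<rho> \<epsilon> t * (fx - real_of_ereal (F t x)) \<le> \<epsilon> / 2"
      using \<rho> \<epsilon> t(1) by (auto simp: admissible_scaling_def)
    have "b y - b x \<le> \<rho> \<epsilon> t * (v - fx) + 3 / 2 * \<epsilon>"
      using scaled_eps_subgradient_increment[OF _ \<rho>t(1,3) t(3) fy] t(1) by blast
    then have "\<epsilon> * (b y - b x) \<le> \<epsilon> * (\<rho> \<epsilon> t * (v - fx) + 3 / 2)"
      using \<epsilon> by (intro mult_left_mono) auto
    also have "\<dots> = \<epsilon> * \<rho> \<epsilon> t * (v - fx) + 3 / 2 * \<epsilon>" by (simp add: algebra_simps)
    also have "\<dots> \<le> v - fx + \<epsilon> * 3"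
    proof -
      have "\<epsilon> * \<rho> \<epsilon> t \<le> 1" using \<epsilon> \<rho>t(1,2) by (intro mult_le_one) auto
      then have "\<epsilon> * \<rho> \<epsilon> t * (v - fx) \<le> v - fx"
        using \<open>fx \<le> v\<close> by (intro mult_left_le_one_le) (use \<epsilon> \<rho>t(1) in auto)
      then show ?thesis using \<epsilon> by simp
    qed
    finally show ?thesis using t(2) by (simp add: right_diff_distrib)
  qed
  then show "\<exists>M. \<forall>\<epsilon>\<in>{0<..1}. \<forall>\<psi>\<in>active_eps_subdiffs \<epsilon> \<union> scaled_eps_subdiffs {\<epsilon>} \<rho> \<epsilon>.
      \<psi> y - \<psi> x \<le> v - fx + \<epsilon> * M"
    by blast
qed

theorem eps_subdiff_eq_Inter_wstar_cco_msum:
  assumes \<rho>: "admissible_scaling \<rho>"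
  shows "eps_subdiff f 0 x = (\<Inter>\<epsilon>\<in>{0<..}. wstar_cco (msum (active_eps_subdiffs \<epsilon>)
    (if active = T then {\<lambda>_. 0} else scaled_eps_subdiffs {0, \<epsilon>} \<rho> \<epsilon>)))"
  using subdiff_subset_wstar_cco_msum wstar_cco_msum_subset_subdiff[OF \<rho>] \<rho>
  unfolding admissible_scaling_def by blast

theorem eps_subdiff_eq_Inter_wstar_cco_union:
  assumes \<rho>: "admissible_scaling \<rho>"
    and min: "\<forall>y. f x \<le> f y"
  shows "eps_subdiff f 0 x =
    (\<Inter>\<epsilon>\<in>{0<..}. wstar_cco (active_eps_subdiffs \<epsilon> \<union> scaled_eps_subdiffs {\<epsilon>} \<rho> \<epsilon>))"
  using subdiff_subset_wstar_cco_union wstar_cco_union_subset_subdiff[OF \<rho> min] \<rho>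
  unfolding admissible_scaling_def by blast

lemma admissible_standard_scaling:
  "admissible_scaling (\<lambda>\<epsilon> t. \<epsilon> / (2 * fx - 2 * real_of_ereal (F t x) + \<epsilon>))"
  unfolding admissible_scaling_def
proof (intro allI impI)
  fix \<epsilon> :: real and t assume "\<epsilon> > 0" "t \<in> T - active"
  define d where "d = fx - real_of_ereal (F t x)"
  have "d > 0" using F_x_less[OF \<open>t \<in> T - active\<close>] by (simp add: d_def)
  then have "0 < \<epsilon> / (2 * d + \<epsilon>)" "\<epsilon> / (2 * d + \<epsilon>) \<le> 1" "\<epsilon> / (2 * d + \<epsilon>) * d \<le> \<epsilon> / 2"
    using \<open>\<epsilon> > 0\<close> by (simp_all add: field_simps)
  then show "0 < \<epsilon> / (2 * fx - 2 * real_of_ereal (F t x) + \<epsilon>) \<and>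
      \<epsilon> / (2 * fx - 2 * real_of_ereal (F t x) + \<epsilon>) \<le> 1 \<and>
      \<epsilon> / (2 * fx - 2 * real_of_ereal (F t x) + \<epsilon>) * (fx - real_of_ereal (F t x)) \<le> \<epsilon> / 2"
    by (simp add: d_def algebra_simps)
qed

end

theorem corollary6:
  fixes F :: "'t::t2_space \<Rightarrow> 'x::{real_vector,t2_space} \<Rightarrow> ereal"
    and T :: "'t set" and f :: "'x \<Rightarrow> ereal" and x :: 'x
  assumes lcs: "lcs_space TYPE('x)"
    and T_ne: "T \<noteq> {}"
    and Ft: "\<And>t. t \<in> T \<Longrightarrow> proper_fun (F t) \<and> convex_fun (F t) \<and> lsc_fun (F t)"
    and f_def: "f = (\<lambda>y. SUP t\<in>T. F t y)"
    and T_compact: "compact T"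
    and usc: "\<And>z c. openin (top_of_set T) {t \<in> T. F t z < c}"
    and x_dom: "f x < \<infinity>"
  shows
    "let Tx = {t \<in> T. F t x = f x};
         \<rho> = (\<lambda>\<epsilon> t. \<epsilon> / (2 * real_of_ereal (f x) - 2 * real_of_ereal (F t x) + \<epsilon>))
     in eps_subdiff f 0 x =
          (\<Inter>\<epsilon>\<in>{0<..}. wstar_cco (msum (\<Union>t\<in>Tx. eps_subdiff (F t) \<epsilon> x)
             (if Tx = T then {(\<lambda>_. 0)}
              else (\<Union>t\<in>T - Tx. smul_set {0, \<epsilon>}
                      (eps_subdiff (\<lambda>y. ereal (\<rho> \<epsilon> t) * F t y) \<epsilon> x)))))
      \<and> ((\<forall>y. f x \<le> f y) \<longrightarrow>
          eps_subdiff f 0 x =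
          (\<Inter>\<epsilon>\<in>{0<..}. wstar_cco ((\<Union>t\<in>Tx. eps_subdiff (F t) \<epsilon> x) \<union>
             (\<Union>t\<in>T - Tx. smul_set {\<epsilon>}
                      (eps_subdiff (\<lambda>y. ereal (\<rho> \<epsilon> t) * F t y) \<epsilon> x)))))"
proof -
  interpret compact_convex_sup F T f x
    using assms by unfold_locales auto
  show ?thesis
    unfolding Let_def
    using eps_subdiff_eq_Inter_wstar_cco_msum[OF admissible_standard_scaling]
      eps_subdiff_eq_Inter_wstar_cco_union[OF admissible_standard_scaling]
    by simp
qed

end
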